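(* For every admissible triple $(j_1,j_2,j_3)\in\mathbf J$ and every $i\in\{1,2,3\}$, $$\hat H_i\,\phi_{j_1,j_2,j_3}=(j_i+1)^2\,\phi_{j_1,j_2,j_3}.$$
   Context: A triple $(j_1,j_2,j_3)$ of nonnegative integers is admissible if $|j_1-j_2|\le j_3\le j_1+j_2$ and $j_1+j_2+j_3$ is even; $\mathbf J$ denotes the set of admissible triples. Let $\mathcal H=\mathbb C[x_{12}+x_{12}^{-1},x_{13}+x_{13}^{-1},x_{23}+x_{23}^{-1}]\subset\mathbb C[x_{12}^{\pm1},x_{13}^{\pm1},x_{23}^{\pm1}]$. For $a,b\in\{\pm1\}$ set $K_{a,b}(j_1,j_2,j_3)=ab\,\frac{(aj_1+bj_2+j_3+a+b+2)(aj_1+bj_2-j_3+a+b)}{4(j_1+1)(j_2+1)}$. The genus two Schur polynomials $(\phi_{j_1,j_2,j_3})_{(j_1,j_2,j_3)\in\mathbf J}$ are the unique family in $\mathcal H$ with $\phi_{0,0,0}=1$ such that for all admissible $(j_1,j_2,j_3)$: $(x_{12}+x_{12}^{-1})\phi_{j_1,j_2,j_3}=\sum_{a,b\in\{\pm1\}}K_{a,b}(j_1,j_2,j_3)\phi_{j_1+a,j_2+b,j_3}$, $(x_{13}+x_{13}^{-1})\phi_{j_1,j_2,j_3}=\sum_{a,b\in\{\pm1\}}K_{a,b}(j_1,j_3,j_2)\phi_{j_1+a,j_2,j_3+b}$, $(x_{23}+x_{23}^{-1})\phi_{j_1,j_2,j_3}=\sum_{a,b\in\{\pm1\}}K_{a,b}(j_2,j_3,j_1)\phi_{j_1,j_2+a,j_3+b}$,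 where $\phi$ of a non-admissible triple is interpreted as $0$. The differential operators (acting on rational functions of $x_{12},x_{13},x_{23}$; write $\partial_{ij}=\partial/\partial x_{ij}$) are $$\hat H_1=x_{12}^2\partial_{12}^2+x_{13}^2\partial_{13}^2+\frac{2(x_{12}^2+1)(x_{13}^2+1)-4x_{12}x_{13}(x_{23}+x_{23}^{-1})}{(x_{12}-x_{12}^{-1})(x_{13}-x_{13}^{-1})}\partial_{12}\partial_{13}+\frac{3x_{12}^2+1}{x_{12}-x_{12}^{-1}}\partial_{12}+\frac{3x_{13}^2+1}{x_{13}-x_{13}^{-1}}\partial_{13}+1,$$ $$\hat H_2=x_{12}^2\partial_{12}^2+x_{23}^2\partial_{23}^2+\frac{2(x_{12}^2+1)(x_{23}^2+1)-4x_{12}x_{23}(x_{13}+x_{13}^{-1})}{(x_{12}-x_{12}^{-1})(x_{23}-x_{23}^{-1})}\partial_{12}\partial_{23}+\frac{3x_{12}^2+1}{x_{12}-x_{12}^{-1}}\partial_{12}+\frac{3x_{23}^2+1}{x_{23}-x_{23}^{-1}}\partial_{23}+1,$$ $$\hat H_3=x_{13}^2\partial_{13}^2+x_{23}^2\partial_{23}^2+\frac{2(x_{13}^2+1)(x_{23}^2+1)-4x_{13}x_{23}(x_{12}+x_{12}^{-1})}{(x_{13}-x_{13}^{-1})(x_{23}-x_{23}^{-1})}\partial_{13}\partial_{23}+\frac{3x_{13}^2+1}{x_{13}-x_{13}^{-1}}\partial_{13}+\frac{3x_{23}^2+1}{x_{23}-x_{23}^{-1}}\partial_{23}+1.$$ 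*)

theory Defs
  imports "HOL-Analysis.Analysis"
begin

type_synonym fun3 = "complex \<Rightarrow> complex \<Rightarrow> complex \<Rightarrow> complex"

definition admissible :: "int \<Rightarrow> int \<Rightarrow> int \<Rightarrow> bool" where
  "admissible j1 j2 j3 \<longleftrightarrow> 0 \<le> j1 \<and> 0 \<le> j2 \<and> 0 \<le> j3 \<and>
     \<bar>j1 - j2\<bar> \<le> j3 \<and> j3 \<le> j1 + j2 \<and> even (j1 + j2 + j3)"

definition Kc :: "int \<Rightarrow> int \<Rightarrow> int \<Rightarrow> int \<Rightarrow> int \<Rightarrow> complex" where
  "Kc a b j1 j2 j3 = of_int (a * b) *
     (of_int (a*j1 + b*j2 + j3 + a + b + 2) * of_int (a*j1 + b*j2 - j3 + a + b))
     / (4 * of_int (j1 + 1) * of_int (j2 + 1))"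

definition phiz :: "(int \<Rightarrow> int \<Rightarrow> int \<Rightarrow> fun3) \<Rightarrow> int \<Rightarrow> int \<Rightarrow> int \<Rightarrow> fun3" where
  "phiz \<phi> j1 j2 j3 = (if admissible j1 j2 j3 then \<phi> j1 j2 j3 else (\<lambda>_ _ _. 0))"

definition pm :: "int set" where "pm = {-1, 1}"

text \<open>The defining recursion of genus two Schur polynomials, as an identity of
  functions on (C - {0})^3 (where the Laurent polynomials are defined).\<close>
definition schur_family :: "(int \<Rightarrow> int \<Rightarrow> int \<Rightarrow> fun3) \<Rightarrow> bool" where
  "schur_family \<phi> \<longleftrightarrow>
    (\<forall>x12 x13 x23. x12 \<noteq> 0 \<longrightarrow> x13 \<noteq> 0 \<longrightarrow> x23 \<noteq> 0 \<longrightarrow>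
      \<phi> 0 0 0 x12 x13 x23 = 1 \<and>
      (\<forall>j1 j2 j3. admissible j1 j2 j3 \<longrightarrow>
        (x12 + inverse x12) * \<phi> j1 j2 j3 x12 x13 x23 =
          (\<Sum>a\<in>pm. \<Sum>b\<in>pm. Kc a b j1 j2 j3 * phiz \<phi> (j1+a) (j2+b) j3 x12 x13 x23) \<and>
        (x13 + inverse x13) * \<phi> j1 j2 j3 x12 x13 x23 =
          (\<Sum>a\<in>pm. \<Sum>b\<in>pm. Kc a b j1 j3 j2 * phiz \<phi> (j1+a) j2 (j3+b) x12 x13 x23) \<and>
        (x23 + inverse x23) * \<phi> j1 j2 j3 x12 x13 x23 =
          (\<Sum>a\<in>pm. \<Sum>b\<in>pm. Kc a b j2 j3 j1 * phiz \<phi> j1 (j2+a) (j3+b) x12 x13 x23)))"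

definition d1 :: "fun3 \<Rightarrow> fun3" where "d1 f x y z = deriv (\<lambda>t. f t y z) x"
definition d2 :: "fun3 \<Rightarrow> fun3" where "d2 f x y z = deriv (\<lambda>t. f x t z) y"
definition d3 :: "fun3 \<Rightarrow> fun3" where "d3 f x y z = deriv (\<lambda>t. f x y t) z"

definition Hgen :: "complex \<Rightarrow> complex \<Rightarrow> complex \<Rightarrow> complex \<Rightarrow> complex \<Rightarrow> complex
     \<Rightarrow> complex \<Rightarrow> complex \<Rightarrow> complex \<Rightarrow> complex" where
  "Hgen u v w fuu fvv fuv fu fv f =
     u^2 * fuu + v^2 * fvv
     + (2 * (u^2 + 1) * (v^2 + 1) - 4 * u * v * (w + inverse w))
        / ((u - inverse u) * (v - inverse v)) * fuv
     + (3 * u^2 + 1) / (u - inverse u) * fu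
     + (3 * v^2 + 1) / (v - inverse v) * fv + f"

definition H1 :: "fun3 \<Rightarrow> fun3" where
  "H1 f x12 x13 x23 = Hgen x12 x13 x23 (d1 (d1 f) x12 x13 x23) (d2 (d2 f) x12 x13 x23)
      (d2 (d1 f) x12 x13 x23) (d1 f x12 x13 x23) (d2 f x12 x13 x23) (f x12 x13 x23)"
definition H2 :: "fun3 \<Rightarrow> fun3" where
  "H2 f x12 x13 x23 = Hgen x12 x23 x13 (d1 (d1 f) x12 x13 x23) (d3 (d3 f) x12 x13 x23)
      (d3 (d1 f) x12 x13 x23) (d1 f x12 x13 x23) (d3 f x12 x13 x23) (f x12 x13 x23)"
definition H3 :: "fun3 \<Rightarrow> fun3" where
  "H3 f x12 x13 x23 = Hgen x13 x23 x12 (d2 (d2 f) x12 x13 x23) (d3 (d3 f) x12 x13 x23)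
      (d3 (d2 f) x12 x13 x23) (d2 f x12 x13 x23) (d3 f x12 x13 x23) (f x12 x13 x23)"

definition Hhat :: "nat \<Rightarrow> fun3 \<Rightarrow> fun3" where
  "Hhat i = (if i = 1 then H1 else if i = 2 then H2 else H3)"

definition jsel :: "nat \<Rightarrow> int \<Rightarrow> int \<Rightarrow> int \<Rightarrow> int" where
  "jsel i j1 j2 j3 = (if i = 1 then j1 else if i = 2 then j2 else j3)"

end

theory Submission
  imports Defs
begin

text \<open>Write \<open>s, t, u\<close> for \<open>x12 + 1/x12, x13 + 1/x13, x23 + 1/x23\<close>. Following the recursions,
  every \<open>\<phi>\<^sub>j\<close> is a polynomial in \<open>s, t, u\<close>, with unique coefficients because \<open>z \<mapsto> z + 1/z\<close> maps
  \<open>\<complex> - {0}\<close> onto \<open>\<complex>\<close>. In these coordinates \<open>H\<^sub>1\<close> is a differential operator \<open>D\<close> whose action on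
  coefficients preserves the \<open>(s, t)\<close>-degree and multiplies the top layer of degree \<open>d\<close> by \<open>(d + 1)\<^sup>2\<close>.
  The equation \<open>D \<phi>\<^sub>j = (j\<^sub>1 + 1)\<^sup>2 \<phi>\<^sub>j\<close> is proved by induction on \<open>j\<^sub>1 + j\<^sub>2 + j\<^sub>3\<close>. If
  \<open>j\<^sub>1 < j\<^sub>2 + j\<^sub>3\<close>, \<open>\<phi>\<^sub>j\<close> comes from smaller triples through the \<open>u\<close>-recursion, and \<open>D\<close> commutes
  with multiplication by \<open>u\<close>. For an extremal triple \<open>j = (b + c, c, b)\<close> the \<open>s\<close>-recursion is needed
  instead: the identity \<open>[D, [D, s]] = 2 (D s + s D) - s\<close> makes the defect \<open>(D - (b + c + 1)\<^sup>2) \<phi>\<^sub>j\<close>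
  an eigenvector for \<open>(b + c - 1)\<^sup>2\<close>. The defect has \<open>(s, t)\<close>-degree below \<open>b + c\<close>, and an explicit
  computation of top layers shows that it vanishes in degree \<open>b + c - 2\<close>, the only degree whose
  top-layer eigenvalue is \<open>(b + c - 1)\<^sup>2\<close>; hence it is zero. \<open>H\<^sub>2\<close> and \<open>H\<^sub>3\<close> reduce to \<open>H\<^sub>1\<close> by
  permuting the labels.\<close>

section \<open>Coefficient arrays and the Casimir operator\<close>

text \<open>\<open>C p q r\<close> is the coefficient of \<open>s\<^sup>p t\<^sup>q u\<^sup>r\<close>; see \<open>poly3\<close> below.\<close>

type_synonym coeffs = "int \<Rightarrow> int \<Rightarrow> int \<Rightarrow> complex"

definition shift_s :: "coeffs \<Rightarrow> coeffs" where "shift_s C p q r = C (p - 1) q r"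

definition shift_t :: "coeffs \<Rightarrow> coeffs" where "shift_t C p q r = C p (q - 1) r"

definition shift_u :: "coeffs \<Rightarrow> coeffs" where "shift_u C p q r = C p q (r - 1)"

definition swap_st :: "coeffs \<Rightarrow> coeffs" where "swap_st C p q r = C q p r"

definition st_degree_le :: "int \<Rightarrow> coeffs \<Rightarrow> bool" where
  "st_degree_le d C \<longleftrightarrow> (\<forall>p q r. d < p + q \<longrightarrow> C p q r = 0)"

definition nonneg_support :: "coeffs \<Rightarrow> bool" where
  "nonneg_support C \<longleftrightarrow> (\<forall>p q r. p < 0 \<or> q < 0 \<or> r < 0 \<longrightarrow> C p q r = 0)"

text \<open>\<open>H\<^sub>1\<close> in the coordinates \<open>s, t, u\<close> is
  \<open>(s\<^sup>2 - 4) \<partial>\<^sub>s\<^sup>2 + (t\<^sup>2 - 4) \<partial>\<^sub>t\<^sup>2 + (2 s t - 4 u) \<partial>\<^sub>s \<partial>\<^sub>t + 3 s \<partial>\<^sub>s + 3 t \<partial>\<^sub>t + 1\<close>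
  (\<open>poly3_casimir\<close>, \<open>H1_poly3\<close>); this is its action on coefficients.\<close>

definition casimir :: "coeffs \<Rightarrow> coeffs" where
  "casimir C p q r = of_int (p + q + 1) ^ 2 * C p q r - 4 * of_int ((p + 2) * (p + 1)) * C (p + 2) q r
     - 4 * of_int ((q + 2) * (q + 1)) * C p (q + 2) r
     - 4 * of_int ((p + 1) * (q + 1)) * C (p + 1) (q + 1) (r - 1)"

lemma casimir_add: "casimir (\<lambda>p q r. X p q r + Y p q r) p q r = casimir X p q r + casimir Y p q r"
  unfolding casimir_def by (simp add: algebra_simps)

lemma casimir_diff: "casimir (\<lambda>p q r. X p q r - Y p q r) p q r = casimir X p q r - casimir Y p q r"
  unfolding casimir_def by (simp add: algebra_simps)

lemma casimir_scale: "casimir (\<lambda>p q r. a * X p q r) p q r = a * casimir X p q r"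
  unfolding casimir_def by (simp add: algebra_simps)

lemma casimir_shift_u: "casimir (shift_u X) p q r = casimir X p q (r - 1)"
  unfolding casimir_def shift_u_def by simp

lemma casimir_swap_st: "casimir (swap_st X) p q r = casimir X q p r"
  unfolding casimir_def swap_st_def by (simp add: algebra_simps)

lemma casimir_top_layer:
  "st_degree_le d X \<Longrightarrow> p + q = d \<Longrightarrow> casimir X p q r = of_int ((d + 1)^2) * X p q r"
  unfolding casimir_def st_degree_le_def by simp

lemma st_degree_le_casimir: "st_degree_le d X \<Longrightarrow> st_degree_le d (casimir X)"
  unfolding casimir_def st_degree_le_def by simp

lemma nonneg_support_casimir: "nonneg_support X \<Longrightarrow> nonneg_support (casimir X)"
  unfolding nonneg_support_def
proof (intro allI impI)
  fix p q r :: int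
  assume X: "\<forall>p q r. p < 0 \<or> q < 0 \<or> r < 0 \<longrightarrow> X p q r = 0" and neg: "p < 0 \<or> q < 0 \<or> r < 0"
  have "of_int ((p + 2) * (p + 1)) * X (p + 2) q r = 0"
    using X neg by (cases "p = -1 \<or> p = -2") auto
  moreover have "of_int ((q + 2) * (q + 1)) * X p (q + 2) r = 0"
    using X neg by (cases "q = -1 \<or> q = -2") auto
  moreover have "of_int ((p + 1) * (q + 1)) * X (p + 1) (q + 1) (r - 1) = 0"
    using X neg by (cases "p = -1 \<or> q = -1") auto
  moreover have "X p q r = 0" using X neg by auto
  ultimately show "casimir X p q r = 0" unfolding casimir_def by (simp only: mult.assoc) simp
qed

definition casimir_eigen :: "complex \<Rightarrow> coeffs \<Rightarrow> bool" where
  "casimir_eigen \<mu> X \<longleftrightarrow> (\<forall>p q r. casimir X p q r = \<mu> * X p q r)"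

lemma casimir_eigen_solve:
  assumes "K \<noteq> 0" and rec: "\<And>p q r. Y p q r = K * X p q r + a1 * Z1 p q r + a2 * Z2 p q r + a3 * Z3 p q r"
    and "casimir_eigen \<mu> Y" "casimir_eigen \<mu> Z1" "casimir_eigen \<mu> Z2" "casimir_eigen \<mu> Z3"
  shows "casimir_eigen \<mu> X"
  unfolding casimir_eigen_def
proof (intro allI)
  fix p q r
  have "K * casimir X p q r = casimir Y p q r - a1 * casimir Z1 p q r - a2 * casimir Z2 p q r - a3 * casimir Z3 p q r"
    unfolding casimir_def rec by (simp add: algebra_simps)
  also have "\<dots> = K * (\<mu> * X p q r)"
    using assms(3-6) unfolding casimir_eigen_def rec by (simp add: algebra_simps)
  finally show "casimir X p q r = \<mu> * X p q r" using assms(1) by simp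
qed

lemma casimir_eigen_shift_u: "casimir_eigen \<mu> X \<Longrightarrow> casimir_eigen \<mu> (shift_u X)"
  unfolding casimir_eigen_def casimir_shift_u by (simp add: shift_u_def)

lemma casimir_shift_s_commutator:
  "casimir (casimir (shift_s X)) p q r - 2 * casimir (shift_s (casimir X)) p q r + shift_s (casimir (casimir X)) p q r
   - 2 * casimir (shift_s X) p q r - 2 * shift_s (casimir X) p q r + shift_s X p q r = 0"
  unfolding casimir_def shift_s_def by (simp add: algebra_simps power2_eq_square)

lemma casimir_eigen_shift_s:
  assumes "casimir_eigen \<mu> X"
  shows "casimir (casimir (shift_s X)) p q r - (2 * \<mu> + 2) * casimir (shift_s X) p q r
    + (\<mu> - 1)^2 * shift_s X p q r = 0"
proof -
  have DX: "casimir X = (\<lambda>p q r. \<mu> * X p q r)"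
    using assms unfolding casimir_eigen_def by (simp add: fun_eq_iff)
  have sDX: "shift_s (casimir X) = (\<lambda>p q r. \<mu> * shift_s X p q r)"
    unfolding DX by (simp add: fun_eq_iff shift_s_def)
  have "shift_s (casimir (casimir X)) p q r = \<mu> * (\<mu> * shift_s X p q r)"
    unfolding DX casimir_scale[abs_def] by (simp add: DX shift_s_def)
  moreover have "casimir (shift_s (casimir X)) p q r = \<mu> * casimir (shift_s X) p q r"
    unfolding sDX by (rule casimir_scale)
  ultimately show ?thesis
    using casimir_shift_s_commutator[of X p q r] unfolding sDX by (simp add: algebra_simps power2_eq_square)
qed

lemma casimir_eigen_eq_0:
  assumes supp: "nonneg_support X" and "st_degree_le d X" and eigen: "casimir_eigen \<mu> X"
    and "\<And>p q r. 0 \<le> p \<Longrightarrow> 0 \<le> q \<Longrightarrow> 0 \<le> r \<Longrightarrow> p + q \<le> d \<Longrightarrow> of_int ((p + q + 1)^2) = \<mu>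
      \<Longrightarrow> X p q r = 0"
  shows "X p q r = 0"
  using assms(2,4)
proof (induction "nat (d + 1)" arbitrary: d rule: less_induct)
  case less
  show ?case
  proof (cases "d < 0")
    case True
    then show ?thesis
      using supp less.prems(1) unfolding nonneg_support_def st_degree_le_def by (cases "p < 0 \<or> q < 0") auto
  next
    case False
    have "st_degree_le (d - 1) X"
      unfolding st_degree_le_def
    proof (intro allI impI)
      fix p q r assume "d - 1 < p + q"
      show "X p q r = 0"
      proof (cases "p + q = d \<and> 0 \<le> p \<and> 0 \<le> q \<and> 0 \<le> r")
        case True
        have "casimir X p q r = of_int ((d + 1)^2) * X p q r" "casimir X p q r = \<mu> * X p q r"
          using casimir_top_layer[OF less.prems(1)] True eigen unfolding casimir_eigen_def by auto
        then have "(of_int ((d + 1)^2) - \<mu>) * X p q r = 0"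
          by (metis left_diff_distrib right_minus_eq)
        moreover have "X p q r = 0" if "of_int ((d + 1)^2) = \<mu>"
          using True that by (intro less.prems(2)) auto
        ultimately show ?thesis by auto
      next
        case False
        then show ?thesis
          using \<open>d - 1 < p + q\<close> less.prems(1) supp unfolding st_degree_le_def nonneg_support_def by auto
      qed
    qed
    then show ?thesis using less.hyps[of "d - 1"] less.prems(2) False by auto
  qed
qed

lemmas of_int_poly_simps =
  of_int_add of_int_diff of_int_mult of_int_minus of_int_power of_int_numeral of_int_0 of_int_1

lemma casimir_below_top_layer:
  assumes top: "\<And>p q r. p + q = b + c \<Longrightarrow> of_int (b + c + 1) * X p q r = of_bool (p = c \<and> q = b \<and> r = 0)"
    and pq: "p + q = b + c - 2"
  shows "of_int (b + c + 1) * (casimir X p q r - of_int ((b + c + 1)^2) * X p q r) =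
    - of_int (4 * (b + c) * (b + c + 1)) * X p q r
    - of_int (4 * c * (c - 1)) * of_bool (p = c - 2 \<and> q = b \<and> r = 0)
    - of_int (4 * b * (b - 1)) * of_bool (p = c \<and> q = b - 2 \<and> r = 0)
    - of_int (4 * c * b) * of_bool (p = c - 1 \<and> q = b - 1 \<and> r = 1)"
proof -
  have "of_int (b + c + 1) * (of_int ((p + 2) * (p + 1)) * X (p + 2) q r)
      = of_int (c * (c - 1)) * of_bool (p = c - 2 \<and> q = b \<and> r = 0)"
    using top[of "p + 2" q r] pq by (auto simp: algebra_simps)
  moreover have "of_int (b + c + 1) * (of_int ((q + 2) * (q + 1)) * X p (q + 2) r)
      = of_int (b * (b - 1)) * of_bool (p = c \<and> q = b - 2 \<and> r = 0)"
    using top[of p "q + 2" r] pq by (auto simp: algebra_simps)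
  moreover have "of_int (b + c + 1) * (of_int ((p + 1) * (q + 1)) * X (p + 1) (q + 1) (r - 1))
      = of_int (c * b) * of_bool (p = c - 1 \<and> q = b - 1 \<and> r = 1)"
    using top[of "p + 1" "q + 1" "r - 1"] pq by (auto simp: algebra_simps)
  moreover have "of_int p + of_int q = (of_int b + of_int c - 2 :: complex)"
    using pq by (metis of_int_add of_int_diff of_int_numeral)
  ultimately show ?thesis
    unfolding casimir_def of_int_poly_simps by algebra
qed

lemma casimir_eigen_below_top_layer:
  assumes top: "\<And>p q r. p + q = b + c \<Longrightarrow> of_int (b + c + 1) * X p q r = of_bool (p = c \<and> q = b \<and> r = 0)"
    and eigen: "casimir_eigen (of_int ((b + c + 1)^2)) X" and pq: "p + q = b + c - 2"
  shows "of_int (4 * (b + c) * (b + c + 1)) * X p q r =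
    - of_int (4 * c * (c - 1)) * of_bool (p = c - 2 \<and> q = b \<and> r = 0)
    - of_int (4 * b * (b - 1)) * of_bool (p = c \<and> q = b - 2 \<and> r = 0)
    - of_int (4 * c * b) * of_bool (p = c - 1 \<and> q = b - 1 \<and> r = 1)"
  using casimir_below_top_layer[OF top pq] eigen unfolding casimir_eigen_def
  by (simp add: algebra_simps)

section \<open>Families of coefficient arrays\<close>

definition coeff_family :: "(int \<Rightarrow> int \<Rightarrow> int \<Rightarrow> coeffs) \<Rightarrow> bool" where
  "coeff_family F \<longleftrightarrow>
     (\<forall>j1 j2 j3. \<not> admissible j1 j2 j3 \<longrightarrow> F j1 j2 j3 = (\<lambda>_ _ _. 0)) \<and>
     (\<forall>j1 j2 j3. nonneg_support (F j1 j2 j3)) \<and>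
     F 0 0 0 = (\<lambda>p q r. of_bool (p = 0 \<and> q = 0 \<and> r = 0)) \<and>
     (\<forall>j1 j2 j3. admissible j1 j2 j3 \<longrightarrow>
        shift_s (F j1 j2 j3) = (\<lambda>p q r. \<Sum>a\<in>pm. \<Sum>b\<in>pm. Kc a b j1 j2 j3 * F (j1 + a) (j2 + b) j3 p q r) \<and>
        shift_t (F j1 j2 j3) = (\<lambda>p q r. \<Sum>a\<in>pm. \<Sum>b\<in>pm. Kc a b j1 j3 j2 * F (j1 + a) j2 (j3 + b) p q r) \<and>
        shift_u (F j1 j2 j3) = (\<lambda>p q r. \<Sum>a\<in>pm. \<Sum>b\<in>pm. Kc a b j2 j3 j1 * F j1 (j2 + a) (j3 + b) p q r))"

lemma sum_pm: "(\<Sum>a\<in>pm. f a) = f 1 + f (-1)"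
  unfolding pm_def by (simp add: add.commute)

lemma coeff_family_non_admissible: "coeff_family F \<Longrightarrow> \<not> admissible j1 j2 j3 \<Longrightarrow> F j1 j2 j3 p q r = 0"
  unfolding coeff_family_def by simp

lemma coeff_family_nonneg_support: "coeff_family F \<Longrightarrow> nonneg_support (F j1 j2 j3)"
  unfolding coeff_family_def by simp

lemma coeff_family_origin: "coeff_family F \<Longrightarrow> F 0 0 0 p q r = of_bool (p = 0 \<and> q = 0 \<and> r = 0)"
  unfolding coeff_family_def by simp

lemma coeff_family_rec_s:
  assumes "coeff_family F" "admissible (j1 - 1) (j2 - 1) j3"
  shows "shift_s (F (j1 - 1) (j2 - 1) j3) p q r =
      Kc 1 1 (j1 - 1) (j2 - 1) j3 * F j1 j2 j3 p q r + Kc 1 (-1) (j1 - 1) (j2 - 1) j3 * F j1 (j2 - 2) j3 p q r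
    + Kc (-1) 1 (j1 - 1) (j2 - 1) j3 * F (j1 - 2) j2 j3 p q r
    + Kc (-1) (-1) (j1 - 1) (j2 - 1) j3 * F (j1 - 2) (j2 - 2) j3 p q r"
  using assms unfolding coeff_family_def sum_pm by (simp add: add.assoc)

lemma coeff_family_rec_t:
  assumes "coeff_family F" "admissible (j1 - 1) j2 (j3 - 1)"
  shows "shift_t (F (j1 - 1) j2 (j3 - 1)) p q r =
      Kc 1 1 (j1 - 1) (j3 - 1) j2 * F j1 j2 j3 p q r + Kc 1 (-1) (j1 - 1) (j3 - 1) j2 * F j1 j2 (j3 - 2) p q r
    + Kc (-1) 1 (j1 - 1) (j3 - 1) j2 * F (j1 - 2) j2 j3 p q r
    + Kc (-1) (-1) (j1 - 1) (j3 - 1) j2 * F (j1 - 2) j2 (j3 - 2) p q r"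
  using assms unfolding coeff_family_def sum_pm by (simp add: add.assoc)

lemma coeff_family_rec_u:
  assumes "coeff_family F" "admissible j1 (j2 - 1) (j3 - 1)"
  shows "shift_u (F j1 (j2 - 1) (j3 - 1)) p q r =
      Kc 1 1 (j2 - 1) (j3 - 1) j1 * F j1 j2 j3 p q r + Kc 1 (-1) (j2 - 1) (j3 - 1) j1 * F j1 j2 (j3 - 2) p q r
    + Kc (-1) 1 (j2 - 1) (j3 - 1) j1 * F j1 (j2 - 2) j3 p q r
    + Kc (-1) (-1) (j2 - 1) (j3 - 1) j1 * F j1 (j2 - 2) (j3 - 2) p q r"
  using assms unfolding coeff_family_def sum_pm by (simp add: add.assoc)

lemma admissible_nonneg: "admissible j1 j2 j3 \<Longrightarrow> 0 \<le> j1 \<and> 0 \<le> j2 \<and> 0 \<le> j3"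
  unfolding admissible_def by auto

lemma admissible_swap12: "admissible j2 j1 j3 = admissible j1 j2 j3"
  unfolding admissible_def by (auto simp: abs_le_iff algebra_simps)

lemma admissible_swap23: "admissible j1 j3 j2 = admissible j1 j2 j3"
  unfolding admissible_def by (auto simp: abs_le_iff algebra_simps)

lemma admissible_rotate: "admissible j2 j3 j1 = admissible j1 j2 j3"
  unfolding admissible_def by (auto simp: abs_le_iff algebra_simps)

lemma admissible_induct [consumes 1, case_names less]:
  assumes "admissible j1 j2 j3"
    and "\<And>j1 j2 j3. admissible j1 j2 j3 \<Longrightarrow>
      (\<And>k1 k2 k3. admissible k1 k2 k3 \<Longrightarrow> k1 + k2 + k3 < j1 + j2 + j3 \<Longrightarrow> P k1 k2 k3) \<Longrightarrow> P j1 j2 j3"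
  shows "P j1 j2 j3"
  using assms(1)
proof (induction "nat (j1 + j2 + j3)" arbitrary: j1 j2 j3 rule: less_induct)
  case less
  show ?case
  proof (rule assms(2)[OF less.prems])
    fix k1 k2 k3 assume "admissible k1 k2 k3" "k1 + k2 + k3 < j1 + j2 + j3"
    moreover have "nat (k1 + k2 + k3) < nat (j1 + j2 + j3)"
      using calculation unfolding admissible_def by auto
    ultimately show "P k1 k2 k3" using less.hyps by blast
  qed
qed

lemma admissible_pred_s: "admissible j1 j2 j3 \<Longrightarrow> j3 < j1 + j2 \<Longrightarrow> admissible (j1 - 1) (j2 - 1) j3"
  unfolding admissible_def by (simp add: abs_le_iff; presburger)

lemma admissible_pred_t: "admissible j1 j2 j3 \<Longrightarrow> j2 < j1 + j3 \<Longrightarrow> admissible (j1 - 1) j2 (j3 - 1)"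
  unfolding admissible_def by (simp add: abs_le_iff; presburger)

lemma admissible_pred_u: "admissible j1 j2 j3 \<Longrightarrow> j1 < j2 + j3 \<Longrightarrow> admissible j1 (j2 - 1) (j3 - 1)"
  unfolding admissible_def by (simp add: abs_le_iff; presburger)

lemma admissible_cases [consumes 1, case_names origin s_step t_step u_step]:
  assumes "admissible j1 j2 j3"
  obtains "j1 = 0" "j2 = 0" "j3 = 0"
    | "admissible (j1 - 1) (j2 - 1) j3"
    | "admissible (j1 - 1) j2 (j3 - 1)"
    | "admissible j1 (j2 - 1) (j3 - 1)"
proof -
  have "0 \<le> j1" "0 \<le> j2" "j3 \<le> j1 + j2" "j1 \<le> j2 + j3" "j2 \<le> j1 + j3"
    using assms unfolding admissible_def by (auto simp: abs_le_iff)
  then consider "j1 = 0" "j2 = 0" "j3 = 0" | "j3 < j1 + j2" | "j2 < j1 + j3" | "j1 < j2 + j3"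
    by linarith
  then show ?thesis
    using that admissible_pred_s[OF assms] admissible_pred_t[OF assms] admissible_pred_u[OF assms] by metis
qed

lemma Kc_11_nonzero: "admissible j1 j2 j3 \<Longrightarrow> Kc 1 1 j1 j2 j3 \<noteq> 0"
  unfolding admissible_def Kc_def by (simp del: of_int_add of_int_mult of_int_diff)

lemma Kc_swap: "Kc a b j1 j2 j3 = Kc b a j2 j1 j3"
  unfolding Kc_def by (simp add: algebra_simps)

lemma Kc_times_denominator:
  assumes "j1 \<noteq> -1" "j2 \<noteq> -1"
  shows "of_int (4 * (j1 + 1) * (j2 + 1)) * Kc a b j1 j2 j3
    = of_int (a * b * (a * j1 + b * j2 + j3 + a + b + 2) * (a * j1 + b * j2 - j3 + a + b))"
proof -
  have nz: "(4 * of_int (j1 + 1) * of_int (j2 + 1) :: complex) \<noteq> 0"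
    using assms by (simp del: of_int_add)
  have "of_int (4 * (j1 + 1) * (j2 + 1)) * Kc a b j1 j2 j3
      = (4 * of_int (j1 + 1) * of_int (j2 + 1)) * (of_int (a * b) * (of_int (a * j1 + b * j2 + j3 + a + b + 2)
          * of_int (a * j1 + b * j2 - j3 + a + b)) / (4 * of_int (j1 + 1) * of_int (j2 + 1)))"
    unfolding Kc_def by (simp only: of_int_mult of_int_numeral)
  also have "\<dots> = of_int (a * b) * (of_int (a * j1 + b * j2 + j3 + a + b + 2) * of_int (a * j1 + b * j2 - j3 + a + b))"
    using nz by (metis nonzero_mult_div_cancel_left times_divide_eq_right)
  also have "\<dots> = of_int (a * b * (a * j1 + b * j2 + j3 + a + b + 2) * (a * j1 + b * j2 - j3 + a + b))"
    by (simp only: of_int_mult mult.assoc)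
  finally show ?thesis .
qed

lemma Kc_extremal:
  assumes b: "0 \<le> b" and c: "1 \<le> c"
  shows "of_int (4 * (b + c) * c) * Kc 1 1 (b + c - 1) (c - 1) b = of_int (4 * c * (b + c + 1))"
    and "of_int (4 * (b + c) * c) * Kc (-1) 1 (b + c - 1) (c - 1) b = of_int (4 * b)"
    and "of_int (4 * (b + c) * c) * Kc (-1) (-1) (b + c - 1) (c - 1) b = of_int (4 * (b + c) * (c - 1))"
proof -
  have "b + c - 1 \<noteq> -1" "c - 1 \<noteq> -1" using b c by simp_all
  note K = Kc_times_denominator[OF this]
  show "of_int (4 * (b + c) * c) * Kc 1 1 (b + c - 1) (c - 1) b = of_int (4 * c * (b + c + 1))"
    using K[of 1 1 b] unfolding of_int_poly_simps by algebra
  show "of_int (4 * (b + c) * c) * Kc (-1) 1 (b + c - 1) (c - 1) b = of_int (4 * b)"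
    using K[of "-1" 1 b] unfolding of_int_poly_simps by algebra
  show "of_int (4 * (b + c) * c) * Kc (-1) (-1) (b + c - 1) (c - 1) b = of_int (4 * (b + c) * (c - 1))"
    using K[of "-1" "-1" b] unfolding of_int_poly_simps by algebra
qed

definition swap_family :: "(int \<Rightarrow> int \<Rightarrow> int \<Rightarrow> coeffs) \<Rightarrow> int \<Rightarrow> int \<Rightarrow> int \<Rightarrow> coeffs" where
  "swap_family F j1 j2 j3 = swap_st (F j1 j3 j2)"

lemma coeff_family_swap:
  assumes F: "coeff_family F"
  shows "coeff_family (swap_family F)"
proof -
  have shift_swap: "shift_s (swap_st X) = swap_st (shift_t X)" "shift_t (swap_st X) = swap_st (shift_s X)"
    "shift_u (swap_st X) = swap_st (shift_u X)" for X
    by (simp_all add: fun_eq_iff shift_s_def shift_t_def shift_u_def swap_st_def)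
  have "swap_family F j1 j2 j3 = (\<lambda>_ _ _. 0)" if "\<not> admissible j1 j2 j3" for j1 j2 j3
    using coeff_family_non_admissible[OF F, of j1 j3 j2] that admissible_swap23[of j1 j2 j3]
    unfolding swap_family_def swap_st_def by (auto simp: fun_eq_iff)
  moreover have "nonneg_support (swap_family F j1 j2 j3)" for j1 j2 j3
    using coeff_family_nonneg_support[OF F, of j1 j3 j2]
    unfolding nonneg_support_def swap_family_def swap_st_def by blast
  moreover have "swap_family F 0 0 0 = (\<lambda>p q r. of_bool (p = 0 \<and> q = 0 \<and> r = 0))"
    using coeff_family_origin[OF F] unfolding swap_family_def swap_st_def by (auto simp: fun_eq_iff)
  moreover have
    "shift_s (swap_family F j1 j2 j3) = (\<lambda>p q r. \<Sum>a\<in>pm. \<Sum>b\<in>pm. Kc a b j1 j2 j3 * swap_family F (j1 + a) (j2 + b) j3 p q r) \<and>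
     shift_t (swap_family F j1 j2 j3) = (\<lambda>p q r. \<Sum>a\<in>pm. \<Sum>b\<in>pm. Kc a b j1 j3 j2 * swap_family F (j1 + a) j2 (j3 + b) p q r) \<and>
     shift_u (swap_family F j1 j2 j3) = (\<lambda>p q r. \<Sum>a\<in>pm. \<Sum>b\<in>pm. Kc a b j2 j3 j1 * swap_family F j1 (j2 + a) (j3 + b) p q r)"
    if "admissible j1 j2 j3" for j1 j2 j3
  proof -
    have "admissible j1 j3 j2" using that admissible_swap23[of j1 j2 j3] by simp
    then have "shift_s (F j1 j3 j2) = (\<lambda>p q r. \<Sum>a\<in>pm. \<Sum>b\<in>pm. Kc a b j1 j3 j2 * F (j1 + a) (j3 + b) j2 p q r)"
      "shift_t (F j1 j3 j2) = (\<lambda>p q r. \<Sum>a\<in>pm. \<Sum>b\<in>pm. Kc a b j1 j2 j3 * F (j1 + a) j3 (j2 + b) p q r)"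
      "shift_u (F j1 j3 j2) = (\<lambda>p q r. \<Sum>a\<in>pm. \<Sum>b\<in>pm. Kc a b j3 j2 j1 * F j1 (j3 + a) (j2 + b) p q r)"
      using F unfolding coeff_family_def by blast+
    moreover have "Kc a b j2 j3 j1 = Kc b a j3 j2 j1" for a b by (rule Kc_swap)
    ultimately show ?thesis
      unfolding swap_family_def shift_swap by (simp add: fun_eq_iff swap_st_def sum_pm add_ac)
  qed
  ultimately show ?thesis unfolding coeff_family_def by blast
qed

lemma st_degree_le_mono: "st_degree_le d C \<Longrightarrow> d \<le> d' \<Longrightarrow> st_degree_le d' C"
  unfolding st_degree_le_def by auto

lemma st_degree_le_shift_s: "st_degree_le (d - 1) C \<Longrightarrow> st_degree_le d (shift_s C)"
  unfolding st_degree_le_def shift_s_def by auto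

lemma st_degree_le_shift_t: "st_degree_le (d - 1) C \<Longrightarrow> st_degree_le d (shift_t C)"
  unfolding st_degree_le_def shift_t_def by auto

lemma st_degree_le_shift_u: "st_degree_le d C \<Longrightarrow> st_degree_le d (shift_u C)"
  unfolding st_degree_le_def shift_u_def by auto

lemma st_degree_le_solve:
  assumes "K \<noteq> 0" "\<And>p q r. Y p q r = K * X p q r + a1 * Z1 p q r + a2 * Z2 p q r + a3 * Z3 p q r"
    and "st_degree_le d Y" "st_degree_le d Z1" "st_degree_le d Z2" "st_degree_le d Z3"
  shows "st_degree_le d X"
  using assms unfolding st_degree_le_def by (metis add.right_neutral mult_eq_0_iff)

lemma coeff_family_st_degree:
  assumes F: "coeff_family F"
  shows "st_degree_le j1 (F j1 j2 j3)"
proof (cases "admissible j1 j2 j3")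
  case False
  then show ?thesis by (simp add: st_degree_le_def coeff_family_non_admissible[OF F])
next
  case True
  then show ?thesis
  proof (induction rule: admissible_induct)
    case (less j1 j2 j3)
    have IH: "st_degree_le d (F k1 k2 k3)" if "k1 + k2 + k3 < j1 + j2 + j3" "k1 \<le> d" for d k1 k2 k3
    proof (cases "admissible k1 k2 k3")
      case True
      then show ?thesis using less.IH[OF True that(1)] st_degree_le_mono that(2) by blast
    next
      case False
      then show ?thesis by (simp add: st_degree_le_def coeff_family_non_admissible[OF F])
    qed
    from less.hyps show ?case
    proof (cases rule: admissible_cases)
      case origin
      then show ?thesis by (simp add: st_degree_le_def coeff_family_origin[OF F])
    next
      case s_step
      show ?thesis
        by (rule st_degree_le_solve[OF Kc_11_nonzero[OF s_step] coeff_family_rec_s[OF F s_step]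
              st_degree_le_shift_s]; rule IH; simp)
    next
      case t_step
      show ?thesis
        by (rule st_degree_le_solve[OF Kc_11_nonzero[OF admissible_swap23[THEN iffD2, OF t_step]]
              coeff_family_rec_t[OF F t_step] st_degree_le_shift_t]; rule IH; simp)
    next
      case u_step
      show ?thesis
        by (rule st_degree_le_solve[OF Kc_11_nonzero[OF admissible_rotate[THEN iffD2, OF u_step]]
              coeff_family_rec_u[OF F u_step] st_degree_le_shift_u]; rule IH; simp)
    qed
  qed
qed

lemma coeff_family_extremal_top_layer:
  assumes F: "coeff_family F" and "0 \<le> b" "0 \<le> c" "p + q = b + c"
  shows "of_int (b + c + 1) * F (b + c) c b p q r = of_bool (p = c \<and> q = b \<and> r = 0)"
  using assms(2-4)
proof (induction "nat (b + c)" arbitrary: b c p q r rule: less_induct)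
  case less
  consider "b = 0" "c = 0" | "1 \<le> c" | "c = 0" "1 \<le> b"
    using less.prems by linarith
  then show ?case
  proof cases
    case 1
    then show ?thesis using coeff_family_origin[OF F] by simp
  next
    case 2
    have adm: "admissible (b + c - 1) (c - 1) b"
      unfolding admissible_def using 2 less.prems by (simp add: abs_le_iff; presburger)
    note rec = coeff_family_rec_s[OF F adm, of p q r, unfolded shift_s_def]
    have "F (b + c) (c - 2) b p q r = 0"
      by (rule coeff_family_non_admissible[OF F]) (use less.prems in \<open>simp add: admissible_def\<close>)
    moreover have "F (b + c - 2) c b p q r = 0" "F (b + c - 2) (c - 2) b p q r = 0"
      using coeff_family_st_degree[OF F, of "b + c - 2"] less.prems unfolding st_degree_le_def by auto
    moreover have "of_int (b + (c - 1) + 1) * F (b + (c - 1)) (c - 1) b (p - 1) q r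
        = of_bool (p - 1 = c - 1 \<and> q = b \<and> r = 0)"
      by (rule less.hyps) (use less.prems 2 in auto)
    then have "of_int (b + c) * F (b + c - 1) (c - 1) b (p - 1) q r = of_bool (p = c \<and> q = b \<and> r = 0)"
      by (simp add: algebra_simps)
    moreover note Kc_extremal(1)[OF less.prems(1) 2]
    ultimately have "of_int (4 * c) * (of_int (b + c + 1) * F (b + c) c b p q r)
        = of_int (4 * c) * of_bool (p = c \<and> q = b \<and> r = 0)"
      using rec unfolding of_int_poly_simps by algebra
    then show ?thesis using 2 by simp
  next
    case 3
    have adm: "admissible (b - 1) 0 (b - 1)"
      unfolding admissible_def using 3 by simp
    note rec = coeff_family_rec_t[OF F, of b 0 b, simplified, OF adm, of p q r, unfolded shift_t_def]
    have "F b 0 (b - 2) p q r = 0" "F (b - 2) 0 b p q r = 0"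
      by (rule coeff_family_non_admissible[OF F], use less.prems in \<open>simp add: admissible_def\<close>)+
    moreover have "F (b - 2) 0 (b - 2) p q r = 0"
      using coeff_family_st_degree[OF F, of "b - 2" 0 "b - 2"] less.prems 3 unfolding st_degree_le_def by auto
    moreover have "of_int ((b - 1) + 0 + 1) * F ((b - 1) + 0) 0 (b - 1) p (q - 1) r
        = of_bool (p = 0 \<and> q - 1 = b - 1 \<and> r = 0)"
      by (rule less.hyps) (use less.prems 3 in auto)
    then have "of_int b * F (b - 1) 0 (b - 1) p (q - 1) r = of_bool (p = 0 \<and> q = b \<and> r = 0)"
      by (simp add: algebra_simps)
    moreover have "of_int (4 * (b - 1 + 1) * (b - 1 + 1)) * Kc 1 1 (b - 1) (b - 1) 0
        = of_int (1 * 1 * (1 * (b - 1) + 1 * (b - 1) + 0 + 1 + 1 + 2) * (1 * (b - 1) + 1 * (b - 1) - 0 + 1 + 1))"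
      by (rule Kc_times_denominator) (use 3 in auto)
    ultimately have "of_int (4 * b) * (of_int (b + 1) * F b 0 b p q r)
        = of_int (4 * b) * of_bool (p = 0 \<and> q = b \<and> r = 0)"
      using rec unfolding of_int_poly_simps by algebra
    then show ?thesis using 3 by simp
  qed
qed

lemma coeff_family_subextremal_top_layer:
  assumes F: "coeff_family F" and b: "0 \<le> b" and c: "0 \<le> c" and pq: "p + q = b + c"
  shows "of_int ((b + c + 2) * (b + c + 1)) * F (b + c) (c + 1) (b + 1) p q r =
    of_int ((c + 1) * (b + 1)) * of_bool (p = c \<and> q = b \<and> r = 1)
    - of_int (b * (c + 1)) * of_bool (p = c + 1 \<and> q = b - 1 \<and> r = 0)
    - of_int (c * (b + 1)) * of_bool (p = c - 1 \<and> q = b + 1 \<and> r = 0)"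
proof -
  have adm: "admissible (b + c) (c + 1 - 1) (b + 1 - 1)" unfolding admissible_def using b c by simp
  note rec = coeff_family_rec_u[OF F adm, of p q r, unfolded shift_u_def, simplified]
  have "F (b + c) (c - 1) (b - 1) p q r = 0"
    by (rule coeff_family_non_admissible[OF F]) (use b in \<open>simp add: admissible_def\<close>)
  moreover have "of_int (b + c + 1) * F (b + c) c b p q (r - 1) = of_bool (p = c \<and> q = b \<and> r = 1)"
    using coeff_family_extremal_top_layer[OF F b c pq, of "r - 1"] by simp
  moreover have "of_int (b + c + 1) * (Kc 1 (-1) c b (b + c) * F (b + c) (c + 1) (b - 1) p q r)
      = Kc 1 (-1) c b (b + c) * of_bool (p = c + 1 \<and> q = b - 1 \<and> r = 0)"
  proof (cases "b = 0")
    case True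
    then show ?thesis by (simp add: Kc_def)
  next
    case False
    then have "of_int ((b - 1) + (c + 1) + 1) * F ((b - 1) + (c + 1)) (c + 1) (b - 1) p q r
        = of_bool (p = c + 1 \<and> q = b - 1 \<and> r = 0)"
      by (intro coeff_family_extremal_top_layer[OF F]) (use b c pq in auto)
    then show ?thesis by (simp add: mult.left_commute)
  qed
  moreover have "of_int (b + c + 1) * (Kc (-1) 1 c b (b + c) * F (b + c) (c - 1) (b + 1) p q r)
      = Kc (-1) 1 c b (b + c) * of_bool (p = c - 1 \<and> q = b + 1 \<and> r = 0)"
  proof (cases "c = 0")
    case True
    then show ?thesis by (simp add: Kc_def)
  next
    case False
    then have "of_int ((b + 1) + (c - 1) + 1) * F ((b + 1) + (c - 1)) (c - 1) (b + 1) p q r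
        = of_bool (p = c - 1 \<and> q = b + 1 \<and> r = 0)"
      by (intro coeff_family_extremal_top_layer[OF F]) (use b c pq in auto)
    then show ?thesis by (simp add: mult.left_commute)
  qed
  moreover have "of_int (4 * (c + 1) * (b + 1)) * Kc 1 1 c b (b + c)
      = of_int (1 * 1 * (1 * c + 1 * b + (b + c) + 1 + 1 + 2) * (1 * c + 1 * b - (b + c) + 1 + 1))"
    "of_int (4 * (c + 1) * (b + 1)) * Kc 1 (-1) c b (b + c)
      = of_int (1 * (-1) * (1 * c + (-1) * b + (b + c) + 1 + (-1) + 2) * (1 * c + (-1) * b - (b + c) + 1 + (-1)))"
    "of_int (4 * (c + 1) * (b + 1)) * Kc (-1) 1 c b (b + c)
      = of_int ((-1) * 1 * ((-1) * c + 1 * b + (b + c) + (-1) + 1 + 2) * ((-1) * c + 1 * b - (b + c) + (-1) + 1))"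
    by (rule Kc_times_denominator; use b c in simp)+
  ultimately have "4 * (of_int ((b + c + 2) * (b + c + 1)) * F (b + c) (c + 1) (b + 1) p q r) = 4 * (
      of_int ((c + 1) * (b + 1)) * of_bool (p = c \<and> q = b \<and> r = 1)
      - of_int (b * (c + 1)) * of_bool (p = c + 1 \<and> q = b - 1 \<and> r = 0)
      - of_int (c * (b + 1)) * of_bool (p = c - 1 \<and> q = b + 1 \<and> r = 0))"
    using rec unfolding of_int_poly_simps by algebra
  then show ?thesis by (rule mult_left_cancel[THEN iffD1, rotated]) simp
qed

lemma coeff_family_extremal_next_layer:
  assumes F: "coeff_family F" and b: "0 \<le> b" and c: "0 \<le> c"
    and eigen: "casimir_eigen (of_int ((b + c + 1)^2)) (F (b + c) c b)" and pq: "p + q = b + c - 2"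
  shows "of_int (4 * (b + c) * (b + c + 1)) * F (b + c) c b p q r =
    - of_int (4 * c * (c - 1)) * of_bool (p = c - 2 \<and> q = b \<and> r = 0)
    - of_int (4 * b * (b - 1)) * of_bool (p = c \<and> q = b - 2 \<and> r = 0)
    - of_int (4 * c * b) * of_bool (p = c - 1 \<and> q = b - 1 \<and> r = 1)"
  by (rule casimir_eigen_below_top_layer[OF coeff_family_extremal_top_layer[OF F b c] eigen pq])

text \<open>The only layer on which the eigenvalue does not force the defect of an extremal array to vanish;
  there it is computed from the \<open>s\<close>-recursion and the top layers of the arrays involved.\<close>

lemma coeff_family_extremal_defect_below_top:
  assumes F: "coeff_family F" and b: "0 \<le> b" and c: "1 \<le> c"
    and eigen: "casimir_eigen (of_int ((b + c)^2)) (F (b + c - 1) (c - 1) b)"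
    and pq: "p + q = b + c - 2" "0 \<le> p" "0 \<le> q"
  shows "casimir (F (b + c) c b) p q r - of_int ((b + c + 1)^2) * F (b + c) c b p q r = 0"
proof -
  \<comment> \<open>The defect and the indicators are kept as atoms: this keeps the Groebner basis computation of the
    final \<open>algebra\<close> step small.\<close>
  define Z where "Z = casimir (F (b + c) c b) p q r - of_int ((b + c + 1)^2) * F (b + c) c b p q r"
  define I1 where "I1 = (of_bool (p = c - 2 \<and> q = b \<and> r = 0) :: complex)"
  define I2 where "I2 = (of_bool (p = c \<and> q = b - 2 \<and> r = 0) :: complex)"
  define I3 where "I3 = (of_bool (p = c - 1 \<and> q = b - 1 \<and> r = 1) :: complex)"
  define K1 where "K1 = Kc 1 1 (b + c - 1) (c - 1) b"
  define K3 where "K3 = Kc (-1) 1 (b + c - 1) (c - 1) b"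
  define K4 where "K4 = Kc (-1) (-1) (b + c - 1) (c - 1) b"
  have adm: "admissible (b + c - 1) (c - 1) b"
    unfolding admissible_def using b c by (simp add: abs_le_iff; presburger)
  have "F (b + c) (c - 2) b p q r = 0"
    by (rule coeff_family_non_admissible[OF F]) (use b in \<open>simp add: admissible_def\<close>)
  then have rec: "F (b + c - 1) (c - 1) b (p - 1) q r
      = K1 * F (b + c) c b p q r + K3 * F (b + c - 2) c b p q r + K4 * F (b + c - 2) (c - 2) b p q r"
    using coeff_family_rec_s[OF F adm, of p q r] unfolding shift_s_def K1_def K3_def K4_def by simp
  have "of_int (b + c + 1) * Z = - of_int (4 * (b + c) * (b + c + 1)) * F (b + c) c b p q r
        - of_int (4 * c * (c - 1)) * I1 - of_int (4 * b * (b - 1)) * I2 - of_int (4 * c * b) * I3"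
    unfolding I1_def I2_def I3_def Z_def
    by (rule casimir_below_top_layer[OF coeff_family_extremal_top_layer[OF F b] pq(1)]) (use c in simp)
  moreover have "of_int (4 * (b + (c - 1)) * (b + (c - 1) + 1)) * F (b + (c - 1)) (c - 1) b (p - 1) q r =
      - of_int (4 * (c - 1) * (c - 1 - 1)) * of_bool (p - 1 = c - 1 - 2 \<and> q = b \<and> r = 0)
      - of_int (4 * b * (b - 1)) * of_bool (p - 1 = c - 1 \<and> q = b - 2 \<and> r = 0)
      - of_int (4 * (c - 1) * b) * of_bool (p - 1 = c - 1 - 1 \<and> q = b - 1 \<and> r = 1)"
    by (rule coeff_family_extremal_next_layer[OF F b]) (use c eigen pq in \<open>simp_all add: algebra_simps\<close>)
  then have "of_int (4 * (b + c - 1) * (b + c)) * F (b + c - 1) (c - 1) b (p - 1) q r =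
      - of_int (4 * (c - 1) * (c - 2)) * I1 - of_int (4 * b * (b - 1)) * I2 - of_int (4 * (c - 1) * b) * I3"
    unfolding I1_def I2_def I3_def by (simp add: algebra_simps)
  moreover have "of_int ((b + c) * (b + c - 1)) * (K3 * F (b + c - 2) c b p q r) =
      K3 * (of_int (c * b) * I3 - of_int ((b - 1) * c) * I2 - of_int ((c - 1) * b) * I1)"
  proof (cases "b = 0")
    case True
    then show ?thesis unfolding K3_def Kc_def by simp
  next
    case False
    have "of_int (((b - 1) + (c - 1) + 2) * ((b - 1) + (c - 1) + 1)) * F ((b - 1) + (c - 1)) ((c - 1) + 1) ((b - 1) + 1) p q r =
        of_int (((c - 1) + 1) * ((b - 1) + 1)) * of_bool (p = c - 1 \<and> q = b - 1 \<and> r = 1)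
        - of_int ((b - 1) * ((c - 1) + 1)) * of_bool (p = (c - 1) + 1 \<and> q = (b - 1) - 1 \<and> r = 0)
        - of_int ((c - 1) * ((b - 1) + 1)) * of_bool (p = (c - 1) - 1 \<and> q = (b - 1) + 1 \<and> r = 0)"
      by (rule coeff_family_subextremal_top_layer[OF F]) (use b c False pq in auto)
    then have "of_int ((b + c) * (b + c - 1)) * F (b + c - 2) c b p q r =
        of_int (c * b) * I3 - of_int ((b - 1) * c) * I2 - of_int ((c - 1) * b) * I1"
      unfolding I1_def I2_def I3_def by (simp add: algebra_simps)
    then show ?thesis by (simp add: mult.left_commute)
  qed
  moreover have "of_int (b + c - 1) * (K4 * F (b + c - 2) (c - 2) b p q r) = K4 * I1"
  proof (cases "c = 1")
    case True
    then show ?thesis unfolding K4_def Kc_def by simp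
  next
    case False
    have "of_int (b + (c - 2) + 1) * F (b + (c - 2)) (c - 2) b p q r = of_bool (p = c - 2 \<and> q = b \<and> r = 0)"
      by (rule coeff_family_extremal_top_layer[OF F b]) (use c False pq in auto)
    then have "of_int (b + c - 1) * F (b + c - 2) (c - 2) b p q r = I1"
      unfolding I1_def by (simp add: algebra_simps)
    then show ?thesis by (simp add: mult.left_commute)
  qed
  moreover note Kc_extremal[OF b c, folded K1_def K3_def K4_def]
  ultimately have "of_int (16 * c * (b + c) * (b + c - 1) * (b + c + 1) * (b + c + 1)) * Z = 0"
    using rec unfolding of_int_poly_simps by algebra
  moreover have "of_int (16 * c * (b + c) * (b + c - 1) * (b + c + 1) * (b + c + 1)) \<noteq> (0 :: complex)"
    using b c pq by (simp del: of_int_mult of_int_add of_int_diff)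
  ultimately have "Z = 0" by simp
  then show ?thesis unfolding Z_def .
qed

lemma coeff_family_extremal_defect_eigen:
  assumes F: "coeff_family F" and b: "0 \<le> b" and c: "1 \<le> c"
    and eigen_prev: "casimir_eigen (of_int ((b + c)^2)) (F (b + c - 1) (c - 1) b)"
    and eigen_A: "casimir_eigen (of_int ((b + c - 1)^2)) (F (b + c - 2) c b)"
    and eigen_B: "casimir_eigen (of_int ((b + c - 1)^2)) (F (b + c - 2) (c - 2) b)"
  shows "casimir_eigen (of_int ((b + c - 1)^2))
    (\<lambda>p q r. casimir (F (b + c) c b) p q r - of_int ((b + c + 1)^2) * F (b + c) c b p q r)"
proof -
  define CT where "CT = F (b + c) c b"
  define CA where "CA = F (b + c - 2) c b"
  define CB where "CB = F (b + c - 2) (c - 2) b"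
  define K1 where "K1 = Kc 1 1 (b + c - 1) (c - 1) b"
  define K3 where "K3 = Kc (-1) 1 (b + c - 1) (c - 1) b"
  define K4 where "K4 = Kc (-1) (-1) (b + c - 1) (c - 1) b"
  \<comment> \<open>As above, atoms keep the Groebner basis computation of \<open>algebra\<close> small.\<close>
  define N where "N = (of_int (b + c) :: complex)"
  define lam where "lam = (N - 1)^2"
  have N: "of_int ((b + c)^2) = N^2" "of_int ((b + c - 1)^2) = lam" "of_int ((b + c + 1)^2) = (N + 1)^2"
    unfolding N_def lam_def by simp_all
  have adm: "admissible (b + c - 1) (c - 1) b"
    unfolding admissible_def using b c by (simp add: abs_le_iff; presburger)
  have "F (b + c) (c - 2) b p q r = 0" for p q r
    by (rule coeff_family_non_admissible[OF F]) (use b in \<open>simp add: admissible_def\<close>)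
  then have W: "shift_s (F (b + c - 1) (c - 1) b) = (\<lambda>p q r. K1 * CT p q r + K3 * CA p q r + K4 * CB p q r)"
    using coeff_family_rec_s[OF F adm] unfolding K1_def K3_def K4_def CT_def CA_def CB_def
    by (simp add: fun_eq_iff)
  have DA: "casimir CA p q r = lam * CA p q r" and DB: "casimir CB p q r = lam * CB p q r" for p q r
    using eigen_A eigen_B unfolding casimir_eigen_def CA_def CB_def N by auto
  have DW: "casimir (shift_s (F (b + c - 1) (c - 1) b))
      = (\<lambda>p q r. K1 * casimir CT p q r + (K3 * lam) * CA p q r + (K4 * lam) * CB p q r)"
    unfolding W by (simp add: fun_eq_iff casimir_add casimir_scale DA DB)
  have K1: "K1 \<noteq> 0" unfolding K1_def by (rule Kc_11_nonzero[OF adm])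
  show ?thesis
    unfolding casimir_eigen_def
  proof (intro allI)
    fix p q r
    have W_at: "shift_s (F (b + c - 1) (c - 1) b) p q r = K1 * CT p q r + K3 * CA p q r + K4 * CB p q r"
      by (simp add: W)
    have DW_at: "casimir (shift_s (F (b + c - 1) (c - 1) b)) p q r
        = K1 * casimir CT p q r + (K3 * lam) * CA p q r + (K4 * lam) * CB p q r"
      by (simp add: DW)
    have DDW: "casimir (casimir (shift_s (F (b + c - 1) (c - 1) b))) p q r
        = K1 * casimir (casimir CT) p q r + (K3 * lam) * (lam * CA p q r) + (K4 * lam) * (lam * CB p q r)"
      unfolding DW by (simp add: casimir_add casimir_scale DA DB)
    have "K1 * (casimir (casimir CT) p q r - (N + 1)^2 * casimir CT p q r
        - lam * (casimir CT p q r - (N + 1)^2 * CT p q r)) = 0"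
      using casimir_eigen_shift_s[OF eigen_prev, of p q r]
      unfolding DDW DW_at W_at N lam_def by algebra
    then have "casimir (casimir CT) p q r - (N + 1)^2 * casimir CT p q r
        - lam * (casimir CT p q r - (N + 1)^2 * CT p q r) = 0"
      using K1 by simp
    then show "casimir (\<lambda>p q r. casimir (F (b + c) c b) p q r - of_int ((b + c + 1)^2) * F (b + c) c b p q r) p q r
        = of_int ((b + c - 1)^2) * (casimir (F (b + c) c b) p q r - of_int ((b + c + 1)^2) * F (b + c) c b p q r)"
      unfolding casimir_diff casimir_scale CT_def N by (rule eq_iff_diff_eq_0[THEN iffD2])
  qed
qed

lemma coeff_family_extremal_casimir_eigen:
  assumes F: "coeff_family F" and b: "0 \<le> b" and c: "1 \<le> c"
    and IH: "\<And>k1 k2 k3. k1 + k2 + k3 < 2 * (b + c) \<Longrightarrow> casimir_eigen (of_int ((k1 + 1)^2)) (F k1 k2 k3)"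
  shows "casimir_eigen (of_int ((b + c + 1)^2)) (F (b + c) c b)"
proof -
  have eigen_prev: "casimir_eigen (of_int ((b + c)^2)) (F (b + c - 1) (c - 1) b)"
    using IH[of "b + c - 1" "c - 1" b] by simp
  have "b + c - 2 + 1 = b + c - 1" by simp
  then have eigen_A: "casimir_eigen (of_int ((b + c - 1)^2)) (F (b + c - 2) c b)"
    and eigen_B: "casimir_eigen (of_int ((b + c - 1)^2)) (F (b + c - 2) (c - 2) b)"
    using IH[of "b + c - 2" c b] IH[of "b + c - 2" "c - 2" b] c by simp_all
  define Z where "Z p q r = casimir (F (b + c) c b) p q r - of_int ((b + c + 1)^2) * F (b + c) c b p q r"
    for p q r
  have deg: "st_degree_le (b + c) (F (b + c) c b)" by (rule coeff_family_st_degree[OF F])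
  have "Z p q r = 0" for p q r
  proof (rule casimir_eigen_eq_0)
    show "nonneg_support Z"
      using coeff_family_nonneg_support[OF F] nonneg_support_casimir[OF coeff_family_nonneg_support[OF F]]
      unfolding Z_def nonneg_support_def by simp
    show "st_degree_le (b + c - 1) Z"
      unfolding st_degree_le_def
    proof (intro allI impI)
      fix p q r assume "b + c - 1 < p + q"
      then consider "b + c < p + q" | "p + q = b + c" by linarith
      then show "Z p q r = 0"
      proof cases
        case 1
        then show ?thesis using deg st_degree_le_casimir[OF deg] unfolding Z_def st_degree_le_def by simp
      next
        case 2
        then show ?thesis using casimir_top_layer[OF deg 2] unfolding Z_def by simp
      qed
    qed
    show "casimir_eigen (of_int ((b + c - 1)^2)) Z"
      unfolding Z_def by (rule coeff_family_extremal_defect_eigen[OF F b c eigen_prev eigen_A eigen_B])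
  next
    fix p q r :: int
    assume "0 \<le> p" "0 \<le> q" "0 \<le> r" "p + q \<le> b + c - 1" and "of_int ((p + q + 1)^2) = (of_int ((b + c - 1)^2) :: complex)"
    then have "(p + q + 1)^2 = (b + c - 1)^2" by (simp only: of_int_eq_iff)
    then have "p + q = b + c - 2"
      using power2_eq_iff_nonneg[of "p + q + 1" "b + c - 1"] \<open>0 \<le> p\<close> \<open>0 \<le> q\<close> b c by simp
    then show "Z p q r = 0"
      unfolding Z_def by (rule coeff_family_extremal_defect_below_top[OF F b c eigen_prev _ \<open>0 \<le> p\<close> \<open>0 \<le> q\<close>])
  qed
  then show ?thesis unfolding casimir_eigen_def Z_def by simp
qed

lemma coeff_family_origin_casimir_eigen: "coeff_family F \<Longrightarrow> casimir_eigen 1 (F 0 0 0)"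
proof -
  assume F: "coeff_family F"
  have "casimir (F 0 0 0) p q r = F 0 0 0 p q r" for p q r
    unfolding casimir_def coeff_family_origin[OF F] by (auto simp del: of_int_mult of_int_add of_int_power)
  then show ?thesis unfolding casimir_eigen_def by simp
qed

lemma coeff_family_inner_casimir_eigen:
  assumes F: "coeff_family F" and adm: "admissible j1 j2 j3" and inner: "j1 < j2 + j3"
    and IH: "\<And>k2 k3. k2 + k3 < j2 + j3 \<Longrightarrow> casimir_eigen (of_int ((j1 + 1)^2)) (F j1 k2 k3)"
  shows "casimir_eigen (of_int ((j1 + 1)^2)) (F j1 j2 j3)"
proof -
  note adm' = admissible_pred_u[OF adm inner]
  show ?thesis
    by (rule casimir_eigen_solve[OF Kc_11_nonzero[OF admissible_rotate[THEN iffD2, OF adm']]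
          coeff_family_rec_u[OF F adm'] casimir_eigen_shift_u]; rule IH; simp)
qed

theorem coeff_family_casimir_eigen:
  assumes "coeff_family F" and "admissible j1 j2 j3"
  shows "casimir_eigen (of_int ((j1 + 1)^2)) (F j1 j2 j3)"
  using assms(2,1)
proof (induction arbitrary: F rule: admissible_induct)
  case (less j1 j2 j3)
  have IH: "casimir_eigen (of_int ((k1 + 1)^2)) (G k1 k2 k3)"
    if "coeff_family G" "k1 + k2 + k3 < j1 + j2 + j3" for G k1 k2 k3
  proof (cases "admissible k1 k2 k3")
    case True
    then show ?thesis using less.IH that by blast
  next
    case False
    then show ?thesis
      using coeff_family_non_admissible[OF that(1)] by (simp add: casimir_eigen_def casimir_def)
  qed
  have nonneg: "0 \<le> j1" "0 \<le> j2" "0 \<le> j3" using admissible_nonneg[OF less.hyps] by auto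
  have "j1 \<le> j2 + j3" using less.hyps unfolding admissible_def by (simp add: abs_le_iff)
  then consider (origin) "j1 = 0" "j2 = 0" "j3 = 0" | (inner) "j1 < j2 + j3"
    | (extremal) "j1 = j3 + j2" "1 \<le> j2" | (extremal_swapped) "j1 = j3" "j2 = 0" "1 \<le> j3"
    using nonneg by linarith
  then show ?case
  proof cases
    case origin
    then show ?thesis using coeff_family_origin_casimir_eigen[OF less.prems] by simp
  next
    case inner
    show ?thesis
      by (rule coeff_family_inner_casimir_eigen[OF less.prems less.hyps inner IH[OF less.prems]]) simp
  next
    case extremal
    have "casimir_eigen (of_int ((j3 + j2 + 1)^2)) (F (j3 + j2) j2 j3)"
      by (rule coeff_family_extremal_casimir_eigen[OF less.prems nonneg(3) extremal(2) IH[OF less.prems]])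
        (use extremal in simp)
    then show ?thesis using extremal by simp
  next
    case extremal_swapped
    note G = coeff_family_swap[OF less.prems]
    have "casimir_eigen (of_int ((0 + j3 + 1)^2)) (swap_family F (0 + j3) j3 0)"
      by (rule coeff_family_extremal_casimir_eigen[OF G order_refl extremal_swapped(3) IH[OF G]])
        (use extremal_swapped in simp)
    then show ?thesis
      using extremal_swapped unfolding casimir_eigen_def swap_family_def casimir_swap_st
      by (simp add: swap_st_def)
  qed
qed

section \<open>Polynomials in the Joukowski images\<close>

definition joukowski :: "complex \<Rightarrow> complex" where "joukowski x = x + inverse x"

definition poly3 :: "nat \<Rightarrow> coeffs \<Rightarrow> complex \<Rightarrow> complex \<Rightarrow> complex \<Rightarrow> complex" where
  "poly3 M C s t u = (\<Sum>p\<le>M. (\<Sum>q\<le>M. (\<Sum>r\<le>M. C (int p) (int q) (int r) * u ^ r) * t ^ q) * s ^ p)"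

definition supported_in :: "nat \<Rightarrow> coeffs \<Rightarrow> bool" where
  "supported_in M C \<longleftrightarrow>
     (\<forall>p q r. C p q r \<noteq> 0 \<longrightarrow> 0 \<le> p \<and> p \<le> int M \<and> 0 \<le> q \<and> q \<le> int M \<and> 0 \<le> r \<and> r \<le> int M)"

definition agrees_poly3 :: "nat \<Rightarrow> coeffs \<Rightarrow> fun3 \<Rightarrow> bool" where
  "agrees_poly3 M C f \<longleftrightarrow>
     (\<forall>x y z. x \<noteq> 0 \<longrightarrow> y \<noteq> 0 \<longrightarrow> z \<noteq> 0 \<longrightarrow> f x y z = poly3 M C (joukowski x) (joukowski y) (joukowski z))"

definition represents :: "fun3 \<Rightarrow> coeffs \<Rightarrow> bool" where
  "represents f C \<longleftrightarrow> (\<exists>M. supported_in M C \<and> agrees_poly3 M C f)"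

definition swap_tu :: "coeffs \<Rightarrow> coeffs" where "swap_tu C p q r = C p r q"

lemma supported_in_mono: "supported_in M C \<Longrightarrow> M \<le> M' \<Longrightarrow> supported_in M' C"
  unfolding supported_in_def by force

lemma supported_in_eq_0: "supported_in M C \<Longrightarrow> int M < p \<or> int M < q \<or> int M < r \<Longrightarrow> C p q r = 0"
  unfolding supported_in_def by force

lemma supported_in_nonneg_support: "supported_in M C \<Longrightarrow> nonneg_support C"
  unfolding supported_in_def nonneg_support_def by force

lemma supported_in_swap_st: "supported_in M C \<Longrightarrow> supported_in M (swap_st C)"
  unfolding supported_in_def swap_st_def by blast

lemma supported_in_swap_tu: "supported_in M C \<Longrightarrow> supported_in M (swap_tu C)"
  unfolding supported_in_def swap_tu_def by blast

lemma supported_in_shift_s: "supported_in M C \<Longrightarrow> supported_in (Suc M) (shift_s C)"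
  unfolding supported_in_def shift_s_def by force

lemma supported_in_shift_t: "supported_in M C \<Longrightarrow> supported_in (Suc M) (shift_t C)"
  unfolding supported_in_def shift_t_def by force

lemma supported_in_shift_u: "supported_in M C \<Longrightarrow> supported_in (Suc M) (shift_u C)"
  unfolding supported_in_def shift_u_def by force

lemma supported_in_linear:
  "supported_in M C \<Longrightarrow> supported_in M D \<Longrightarrow> supported_in M (\<lambda>p q r. a * C p q r + b * D p q r)"
  unfolding supported_in_def by (metis add.right_neutral mult_zero_right)

lemma poly3_mono:
  assumes C: "supported_in M C" and "M \<le> M'"
  shows "poly3 M' C s t u = poly3 M C s t u"
proof -
  have zero: "C (int p) (int q) (int r) = 0" if "M < p \<or> M < q \<or> M < r" for p q r
    using supported_in_eq_0[OF C] that by auto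
  have restrict: "(\<Sum>i\<le>M'. f i) = (\<Sum>i\<le>M. f i)" if "\<And>i. M < i \<Longrightarrow> f i = 0" for f :: "nat \<Rightarrow> complex"
    by (rule sum.mono_neutral_right) (use \<open>M \<le> M'\<close> that in auto)
  show ?thesis
    unfolding poly3_def by (simp add: zero restrict)
qed

lemma poly3_linear:
  "poly3 M (\<lambda>p q r. a * C p q r + b * D p q r) s t u = a * poly3 M C s t u + b * poly3 M D s t u"
  unfolding poly3_def by (simp add: sum.distrib sum_distrib_left algebra_simps)

lemma poly3_swap_st: "poly3 M (swap_st C) t s u = poly3 M C s t u"
proof -
  have "poly3 M C s t u = (\<Sum>p\<le>M. \<Sum>q\<le>M. (\<Sum>r\<le>M. C (int p) (int q) (int r) * u ^ r) * t ^ q * s ^ p)"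
    "poly3 M (swap_st C) t s u = (\<Sum>p\<le>M. \<Sum>q\<le>M. (\<Sum>r\<le>M. C (int q) (int p) (int r) * u ^ r) * s ^ q * t ^ p)"
    unfolding poly3_def swap_st_def by (simp_all add: sum_distrib_right)
  then show ?thesis by (subst (asm) sum.swap) (simp add: mult_ac)
qed

lemma poly3_swap_tu: "poly3 M (swap_tu C) s u t = poly3 M C s t u"
proof -
  have "(\<Sum>q\<le>M. (\<Sum>r\<le>M. C (int p) (int q) (int r) * u ^ r) * t ^ q)
      = (\<Sum>q\<le>M. (\<Sum>r\<le>M. C (int p) (int r) (int q) * t ^ r) * u ^ q)" for p
  proof -
    have "(\<Sum>q\<le>M. (\<Sum>r\<le>M. C (int p) (int q) (int r) * u ^ r) * t ^ q)
        = (\<Sum>q\<le>M. \<Sum>r\<le>M. C (int p) (int q) (int r) * u ^ r * t ^ q)"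
      "(\<Sum>q\<le>M. (\<Sum>r\<le>M. C (int p) (int r) (int q) * t ^ r) * u ^ q)
        = (\<Sum>q\<le>M. \<Sum>r\<le>M. C (int p) (int r) (int q) * t ^ r * u ^ q)"
      by (simp_all add: sum_distrib_right)
    then show ?thesis by (subst (asm) sum.swap) (simp add: mult_ac)
  qed
  then show ?thesis unfolding poly3_def swap_tu_def by simp
qed

lemma poly3_shift_s:
  assumes C: "supported_in M C" and "M < M'"
  shows "poly3 M' (shift_s C) s t u = s * poly3 M' C s t u"
proof -
  obtain N where M': "M' = Suc N" using \<open>M < M'\<close> by (cases M') auto
  define A where "A p = (\<Sum>q\<le>M'. (\<Sum>r\<le>M'. C (int p) (int q) (int r) * u ^ r) * t ^ q)" for p :: nat
  have "C (-1) q r = 0" for q r using C unfolding supported_in_def by force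
  then have "poly3 M' (shift_s C) s t u = (\<Sum>p\<le>N. A p * s ^ Suc p)"
    unfolding poly3_def shift_s_def M' A_def by (subst sum.atMost_Suc_shift) simp
  moreover have "A (Suc N) = 0"
    unfolding A_def using supported_in_eq_0[OF C] \<open>M < M'\<close> M' by simp
  then have "poly3 M' C s t u = (\<Sum>p\<le>N. A p * s ^ p)"
    using sum.atMost_Suc[of "\<lambda>p. A p * s ^ p" N] unfolding poly3_def A_def M' by simp
  ultimately show ?thesis by (simp add: sum_distrib_left algebra_simps)
qed

lemma poly3_shift_t:
  assumes "supported_in M C" and "M < M'"
  shows "poly3 M' (shift_t C) s t u = t * poly3 M' C s t u"
proof -
  have "shift_t C = swap_st (shift_s (swap_st C))"
    by (simp add: fun_eq_iff swap_st_def shift_s_def shift_t_def)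
  then show ?thesis
    using poly3_shift_s[OF supported_in_swap_st[OF assms(1)] assms(2), of t s u]
    by (simp add: poly3_swap_st)
qed

lemma poly3_shift_u:
  assumes "supported_in M C" and "M < M'"
  shows "poly3 M' (shift_u C) s t u = u * poly3 M' C s t u"
proof -
  have "shift_u C = swap_tu (shift_t (swap_tu C))"
    by (simp add: fun_eq_iff swap_tu_def shift_t_def shift_u_def)
  then show ?thesis
    using poly3_shift_t[OF supported_in_swap_tu[OF assms(1)] assms(2), of s u t]
    by (simp add: poly3_swap_tu)
qed

lemma poly3_eq_0_imp_eq_0:
  assumes C: "supported_in M C" and zero: "\<And>s t u. poly3 M C s t u = 0"
  shows "C p q r = 0"
proof (cases "0 \<le> p \<and> p \<le> int M \<and> 0 \<le> q \<and> q \<le> int M \<and> 0 \<le> r \<and> r \<le> int M")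
  case False
  then show ?thesis using C unfolding supported_in_def by blast
next
  case True
  then obtain p' q' r' where pqr: "p = int p'" "q = int q'" "r = int r'" "p' \<le> M" "q' \<le> M" "r' \<le> M"
    by (metis nat_0_le nat_le_iff)
  have "(\<Sum>q\<le>M. (\<Sum>r\<le>M. C (int p') (int q) (int r) * u ^ r) * t ^ q) = 0" for t u
    using zero[unfolded poly3_def] pqr
      polyfun_eq_0[where c = "\<lambda>p. (\<Sum>q\<le>M. (\<Sum>r\<le>M. C (int p) (int q) (int r) * u ^ r) * t ^ q)" and n = M]
    by blast
  then have "(\<Sum>r\<le>M. C (int p') (int q') (int r) * u ^ r) = 0" for u
    using pqr polyfun_eq_0[where c = "\<lambda>q. (\<Sum>r\<le>M. C (int p') (int q) (int r) * u ^ r)" and n = M] by blast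
  then have "C (int p') (int q') (int r') = 0"
    using pqr polyfun_eq_0[where c = "\<lambda>r. C (int p') (int q') (int r)" and n = M] by blast
  then show ?thesis using pqr by simp
qed

lemma joukowski_surj: "\<exists>x. x \<noteq> 0 \<and> joukowski x = w"
proof -
  define d where "d = csqrt (w\<^sup>2 - 4)"
  have d: "d\<^sup>2 = w\<^sup>2 - 4" unfolding d_def by simp
  define x where "x = (w + d) / 2"
  define y where "y = (w - d) / 2"
  have "x * y = 1"
    unfolding x_def y_def using d by (simp add: field_simps power2_eq_square)
  then have "x \<noteq> 0" "inverse x = y" using inverse_unique by auto
  moreover have "x + y = w" unfolding x_def y_def by (simp add: field_simps)
  ultimately show ?thesis unfolding joukowski_def by auto
qed

lemma agrees_poly3_mono:
  assumes "supported_in M C" "agrees_poly3 M C f" "M \<le> M'"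
  shows "agrees_poly3 M' C f"
  using assms(2) poly3_mono[OF assms(1,3)] unfolding agrees_poly3_def by simp

lemma represents_eventually:
  assumes "represents f C"
  shows "\<exists>M0. \<forall>M\<ge>M0. supported_in M C \<and> agrees_poly3 M C f"
proof -
  obtain M0 where "supported_in M0 C" "agrees_poly3 M0 C f"
    using assms unfolding represents_def by blast
  then show ?thesis
    using supported_in_mono[OF \<open>supported_in M0 C\<close>] agrees_poly3_mono[OF \<open>supported_in M0 C\<close>] by blast
qed

lemma represents_common_bound:
  assumes "represents f C" "represents g D"
  obtains M where "supported_in M C" "agrees_poly3 M C f" "supported_in M D" "agrees_poly3 M D g"
proof -
  obtain M1 M2 where "\<forall>M\<ge>M1. supported_in M C \<and> agrees_poly3 M C f" "\<forall>M\<ge>M2. supported_in M D \<and> agrees_poly3 M D g"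
    using represents_eventually[OF assms(1)] represents_eventually[OF assms(2)] by blast
  then have "supported_in (max M1 M2) C \<and> agrees_poly3 (max M1 M2) C f"
    "supported_in (max M1 M2) D \<and> agrees_poly3 (max M1 M2) D g"
    by simp_all
  then show ?thesis using that by blast
qed

lemma represents_unique:
  assumes "represents f C" "represents g D" "\<And>x y z. x \<noteq> 0 \<Longrightarrow> y \<noteq> 0 \<Longrightarrow> z \<noteq> 0 \<Longrightarrow> f x y z = g x y z"
  shows "C = D"
proof -
  obtain M where C: "supported_in M C" "agrees_poly3 M C f" and D: "supported_in M D" "agrees_poly3 M D g"
    using represents_common_bound[OF assms(1,2)] .
  have zero: "poly3 M (\<lambda>p q r. 1 * C p q r + (-1) * D p q r) s t u = 0" for s t u
  proof -
    obtain x y z where "x \<noteq> 0" "y \<noteq> 0" "z \<noteq> 0" "joukowski x = s" "joukowski y = t" "joukowski z = u"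
      using joukowski_surj by metis
    then show ?thesis using C(2) D(2) assms(3) unfolding agrees_poly3_def poly3_linear by force
  qed
  have "1 * C p q r + (-1) * D p q r = 0" for p q r
    by (rule poly3_eq_0_imp_eq_0[OF supported_in_linear[OF C(1) D(1)] zero])
  then show ?thesis by (simp add: fun_eq_iff)
qed

lemma represents_cong:
  assumes "represents f C" and "\<And>x y z. x \<noteq> 0 \<Longrightarrow> y \<noteq> 0 \<Longrightarrow> z \<noteq> 0 \<Longrightarrow> g x y z = f x y z"
  shows "represents g C"
proof -
  obtain M where "supported_in M C" "agrees_poly3 M C f"
    using assms(1) unfolding represents_def by blast
  moreover have "agrees_poly3 M C g"
    using calculation(2) assms(2) unfolding agrees_poly3_def by simp
  ultimately show ?thesis unfolding represents_def by blast
qed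

lemma represents_linear:
  assumes "represents f C" "represents g D"
  shows "represents (\<lambda>x y z. a * f x y z + b * g x y z) (\<lambda>p q r. a * C p q r + b * D p q r)"
proof -
  obtain M where C: "supported_in M C" "agrees_poly3 M C f" and D: "supported_in M D" "agrees_poly3 M D g"
    using represents_common_bound[OF assms] .
  have "agrees_poly3 M (\<lambda>p q r. a * C p q r + b * D p q r) (\<lambda>x y z. a * f x y z + b * g x y z)"
    using C(2) D(2) unfolding agrees_poly3_def poly3_linear by simp
  then show ?thesis
    unfolding represents_def using supported_in_linear[OF C(1) D(1)] by blast
qed

lemma represents_zero: "represents (\<lambda>x y z. 0) (\<lambda>p q r. 0)"
  unfolding represents_def supported_in_def agrees_poly3_def poly3_def by simp

lemma represents_one: "represents (\<lambda>x y z. 1) (\<lambda>p q r. of_bool (p = 0 \<and> q = 0 \<and> r = 0))"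
  unfolding represents_def supported_in_def agrees_poly3_def poly3_def by (intro exI[of _ 0]) auto

lemma represents_sum:
  assumes "finite A" "\<And>a. a \<in> A \<Longrightarrow> represents (f a) (C a)"
  shows "represents (\<lambda>x y z. \<Sum>a\<in>A. f a x y z) (\<lambda>p q r. \<Sum>a\<in>A. C a p q r)"
  using assms
proof (induction A rule: finite_induct)
  case empty
  then show ?case using represents_zero by simp
next
  case (insert a A)
  have "represents (\<lambda>x y z. 1 * f a x y z + 1 * (\<Sum>a\<in>A. f a x y z)) (\<lambda>p q r. 1 * C a p q r + 1 * (\<Sum>a\<in>A. C a p q r))"
    by (rule represents_linear) (use insert in auto)
  then show ?case using insert by simp
qed

lemma represents_pm_sum:
  assumes "\<And>a b. represents (f a b) (C a b)"
  shows "represents (\<lambda>x y z. \<Sum>a\<in>pm. \<Sum>b\<in>pm. k a b * f a b x y z) (\<lambda>p q r. \<Sum>a\<in>pm. \<Sum>b\<in>pm. k a b * C a b p q r)"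
proof -
  have scaled: "represents (\<lambda>x y z. k a b * f a b x y z) (\<lambda>p q r. k a b * C a b p q r)" for a b
    using represents_linear[OF assms assms, of "k a b" a b 0] by simp
  show ?thesis by (intro represents_sum scaled) (simp_all add: pm_def)
qed

lemma represents_shift_s: "represents f C \<Longrightarrow> represents (\<lambda>x y z. joukowski x * f x y z) (shift_s C)"
  unfolding represents_def agrees_poly3_def
  using supported_in_shift_s poly3_shift_s[OF _ lessI] poly3_mono[OF _ le_SucI[OF order_refl]]
  by (metis (no_types, lifting))

lemma represents_shift_t: "represents f C \<Longrightarrow> represents (\<lambda>x y z. joukowski y * f x y z) (shift_t C)"
  unfolding represents_def agrees_poly3_def
  using supported_in_shift_t poly3_shift_t[OF _ lessI] poly3_mono[OF _ le_SucI[OF order_refl]]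
  by (metis (no_types, lifting))

lemma represents_shift_u: "represents f C \<Longrightarrow> represents (\<lambda>x y z. joukowski z * f x y z) (shift_u C)"
  unfolding represents_def agrees_poly3_def
  using supported_in_shift_u poly3_shift_u[OF _ lessI] poly3_mono[OF _ le_SucI[OF order_refl]]
  by (metis (no_types, lifting))

lemma represents_solve:
  assumes "K \<noteq> 0" "represents Y C0" "represents Z1 C1" "represents Z2 C2" "represents Z3 C3"
    and "\<And>x y z. x \<noteq> 0 \<Longrightarrow> y \<noteq> 0 \<Longrightarrow> z \<noteq> 0 \<Longrightarrow>
      Y x y z = K * X x y z + a1 * Z1 x y z + a2 * Z2 x y z + a3 * Z3 x y z"
  shows "\<exists>C. represents X C"
proof -
  have "represents (\<lambda>x y z. a1 * Z1 x y z + a2 * Z2 x y z) (\<lambda>p q r. a1 * C1 p q r + a2 * C2 p q r)"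
    by (rule represents_linear[OF assms(3,4)])
  then have "represents (\<lambda>x y z. 1 * (a1 * Z1 x y z + a2 * Z2 x y z) + a3 * Z3 x y z)
      (\<lambda>p q r. 1 * (a1 * C1 p q r + a2 * C2 p q r) + a3 * C3 p q r)"
    by (rule represents_linear[OF _ assms(5)])
  then have "represents (\<lambda>x y z. inverse K * Y x y z - inverse K * (1 * (a1 * Z1 x y z + a2 * Z2 x y z) + a3 * Z3 x y z))
      (\<lambda>p q r. inverse K * C0 p q r - inverse K * (1 * (a1 * C1 p q r + a2 * C2 p q r) + a3 * C3 p q r))"
    using represents_linear[OF assms(2), of _ _ "inverse K" "- inverse K"] by simp
  then have "represents X
      (\<lambda>p q r. inverse K * C0 p q r - inverse K * (1 * (a1 * C1 p q r + a2 * C2 p q r) + a3 * C3 p q r))"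
    by (rule represents_cong) (simp add: assms(1,6) field_simps)
  then show ?thesis by blast
qed

section \<open>Derivatives and the operator H1\<close>

definition deriv_s :: "coeffs \<Rightarrow> coeffs" where "deriv_s C p q r = of_int (p + 1) * C (p + 1) q r"

definition deriv_t :: "coeffs \<Rightarrow> coeffs" where "deriv_t C p q r = of_int (q + 1) * C p (q + 1) r"

lemma supported_in_deriv_s: "supported_in M C \<Longrightarrow> supported_in M (deriv_s C)"
  unfolding supported_in_def deriv_s_def
proof (intro allI impI)
  fix p q r
  assume "\<forall>p q r. C p q r \<noteq> 0 \<longrightarrow> 0 \<le> p \<and> p \<le> int M \<and> 0 \<le> q \<and> q \<le> int M \<and> 0 \<le> r \<and> r \<le> int M"
    and "of_int (p + 1) * C (p + 1) q r \<noteq> 0"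
  moreover have "p + 1 \<noteq> 0" using calculation(2) by (metis mult_eq_0_iff of_int_0)
  ultimately show "0 \<le> p \<and> p \<le> int M \<and> 0 \<le> q \<and> q \<le> int M \<and> 0 \<le> r \<and> r \<le> int M"
    by force
qed

lemma supported_in_deriv_t: "supported_in M C \<Longrightarrow> supported_in M (deriv_t C)"
  unfolding supported_in_def deriv_t_def
proof (intro allI impI)
  fix p q r
  assume "\<forall>p q r. C p q r \<noteq> 0 \<longrightarrow> 0 \<le> p \<and> p \<le> int M \<and> 0 \<le> q \<and> q \<le> int M \<and> 0 \<le> r \<and> r \<le> int M"
    and "of_int (q + 1) * C p (q + 1) r \<noteq> 0"
  moreover have "q + 1 \<noteq> 0" using calculation(2) by (metis mult_eq_0_iff of_int_0)
  ultimately show "0 \<le> p \<and> p \<le> int M \<and> 0 \<le> q \<and> q \<le> int M \<and> 0 \<le> r \<and> r \<le> int M"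
    by force
qed

lemma poly3_has_derivative_s:
  assumes C: "supported_in M C"
  shows "((\<lambda>s. poly3 M C s t u) has_field_derivative poly3 M (deriv_s C) s t u) (at s)"
proof -
  define A where "A p = (\<Sum>q\<le>M. (\<Sum>r\<le>M. C (int p) (int q) (int r) * u ^ r) * t ^ q)" for p :: nat
  have D: "((\<lambda>s. \<Sum>p\<le>M. A p * s ^ p) has_field_derivative (\<Sum>p\<le>M. A p * (of_nat p * (1 * s ^ (p - Suc 0))))) (at s)"
    by (intro DERIV_sum DERIV_cmult DERIV_power DERIV_ident)
  have "A (Suc M) = 0"
    unfolding A_def using supported_in_eq_0[OF C] by simp
  have "(\<Sum>p\<le>M. A p * (of_nat p * (1 * s ^ (p - Suc 0)))) = (\<Sum>p\<le>M. of_nat (Suc p) * A (Suc p) * s ^ p)"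
  proof (cases M)
    case 0
    then show ?thesis using \<open>A (Suc M) = 0\<close> by simp
  next
    case (Suc N)
    have "(\<Sum>p\<le>N. of_nat (Suc p) * A (Suc p) * s ^ p) = (\<Sum>p\<le>Suc N. of_nat (Suc p) * A (Suc p) * s ^ p)"
      using Suc \<open>A (Suc M) = 0\<close> by simp
    then show ?thesis
      unfolding Suc by (subst sum.atMost_Suc_shift) (simp add: algebra_simps)
  qed
  also have "\<dots> = poly3 M (deriv_s C) s t u"
    unfolding poly3_def deriv_s_def A_def by (simp add: sum_distrib_left algebra_simps)
  finally show ?thesis using D unfolding poly3_def A_def by simp
qed

lemma poly3_has_derivative_t:
  assumes "supported_in M C"
  shows "((\<lambda>t. poly3 M C s t u) has_field_derivative poly3 M (deriv_t C) s t u) (at t)"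
proof -
  have "deriv_t C = swap_st (deriv_s (swap_st C))"
    by (simp add: fun_eq_iff swap_st_def deriv_s_def deriv_t_def)
  then show ?thesis
    using poly3_has_derivative_s[OF supported_in_swap_st[OF assms], where s = t and t = s and u = u]
    by (simp add: poly3_swap_st)
qed

definition joukowski' :: "complex \<Rightarrow> complex" where "joukowski' x = 1 - inverse x ^ 2"

lemma joukowski_has_derivative: "x \<noteq> 0 \<Longrightarrow> (joukowski has_field_derivative joukowski' x) (at x)"
  unfolding joukowski_def[abs_def] joukowski'_def
  by (rule derivative_eq_intros refl | simp add: power2_eq_square)+

lemma joukowski'_has_derivative: "x \<noteq> 0 \<Longrightarrow> (joukowski' has_field_derivative 2 * inverse x ^ 3) (at x)"
  unfolding joukowski'_def[abs_def]
  by (rule derivative_eq_intros refl | simp add: power2_eq_square field_simps eval_nat_numeral)+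

lemma deriv_eq_off_zero:
  assumes "(g has_field_derivative D) (at x)" "x \<noteq> 0" "\<And>t. t \<noteq> 0 \<Longrightarrow> h t = g t"
  shows "deriv h x = D"
proof -
  have "(h has_field_derivative D) (at x)"
    by (rule has_field_derivative_transform_within_open[OF assms(1), of "-{0}"]) (use assms(2,3) in auto)
  then show ?thesis by (rule DERIV_imp_deriv)
qed

lemma d1_poly3:
  assumes "supported_in M C" "agrees_poly3 M C f" "x \<noteq> 0" "y \<noteq> 0" "z \<noteq> 0"
  shows "d1 f x y z = poly3 M (deriv_s C) (joukowski x) (joukowski y) (joukowski z) * joukowski' x"
  unfolding d1_def
  by (rule deriv_eq_off_zero[OF DERIV_chain2[OF poly3_has_derivative_s[OF assms(1)] joukowski_has_derivative]])
    (use assms in \<open>auto simp: agrees_poly3_def\<close>)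

lemma d2_poly3:
  assumes "supported_in M C" "agrees_poly3 M C f" "x \<noteq> 0" "y \<noteq> 0" "z \<noteq> 0"
  shows "d2 f x y z = poly3 M (deriv_t C) (joukowski x) (joukowski y) (joukowski z) * joukowski' y"
  unfolding d2_def
  by (rule deriv_eq_off_zero[OF DERIV_chain2[OF poly3_has_derivative_t[OF assms(1)] joukowski_has_derivative]])
    (use assms in \<open>auto simp: agrees_poly3_def\<close>)

lemma d11_poly3:
  assumes C: "supported_in M C" and f: "agrees_poly3 M C f" and "x \<noteq> 0" "y \<noteq> 0" "z \<noteq> 0"
  shows "d1 (d1 f) x y z =
    poly3 M (deriv_s (deriv_s C)) (joukowski x) (joukowski y) (joukowski z) * joukowski' x * joukowski' x
    + poly3 M (deriv_s C) (joukowski x) (joukowski y) (joukowski z) * (2 * inverse x ^ 3)"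
proof -
  have "((\<lambda>x. poly3 M (deriv_s C) (joukowski x) (joukowski y) (joukowski z) * joukowski' x) has_field_derivative
      poly3 M (deriv_s (deriv_s C)) (joukowski x) (joukowski y) (joukowski z) * joukowski' x * joukowski' x
      + poly3 M (deriv_s C) (joukowski x) (joukowski y) (joukowski z) * (2 * inverse x ^ 3)) (at x)"
    by (rule DERIV_mult[OF DERIV_chain2[OF poly3_has_derivative_s[OF supported_in_deriv_s[OF C]]
          joukowski_has_derivative] joukowski'_has_derivative, THEN DERIV_cong])
      (use assms in \<open>simp_all add: algebra_simps\<close>)
  then show ?thesis
    unfolding d1_def[of "d1 f"] by (rule deriv_eq_off_zero) (use assms in \<open>simp_all add: d1_poly3\<close>)
qed

lemma d22_poly3:
  assumes C: "supported_in M C" and f: "agrees_poly3 M C f" and "x \<noteq> 0" "y \<noteq> 0" "z \<noteq> 0"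
  shows "d2 (d2 f) x y z =
    poly3 M (deriv_t (deriv_t C)) (joukowski x) (joukowski y) (joukowski z) * joukowski' y * joukowski' y
    + poly3 M (deriv_t C) (joukowski x) (joukowski y) (joukowski z) * (2 * inverse y ^ 3)"
proof -
  have "((\<lambda>y. poly3 M (deriv_t C) (joukowski x) (joukowski y) (joukowski z) * joukowski' y) has_field_derivative
      poly3 M (deriv_t (deriv_t C)) (joukowski x) (joukowski y) (joukowski z) * joukowski' y * joukowski' y
      + poly3 M (deriv_t C) (joukowski x) (joukowski y) (joukowski z) * (2 * inverse y ^ 3)) (at y)"
    by (rule DERIV_mult[OF DERIV_chain2[OF poly3_has_derivative_t[OF supported_in_deriv_t[OF C]]
          joukowski_has_derivative] joukowski'_has_derivative, THEN DERIV_cong])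
      (use assms in \<open>simp_all add: algebra_simps\<close>)
  then show ?thesis
    unfolding d2_def[of "d2 f"] by (rule deriv_eq_off_zero) (use assms in \<open>simp_all add: d2_poly3\<close>)
qed

lemma d21_poly3:
  assumes C: "supported_in M C" and f: "agrees_poly3 M C f" and "x \<noteq> 0" "y \<noteq> 0" "z \<noteq> 0"
  shows "d2 (d1 f) x y z =
    poly3 M (deriv_t (deriv_s C)) (joukowski x) (joukowski y) (joukowski z) * joukowski' y * joukowski' x"
proof -
  have "((\<lambda>y. poly3 M (deriv_s C) (joukowski x) (joukowski y) (joukowski z) * joukowski' x) has_field_derivative
      poly3 M (deriv_t (deriv_s C)) (joukowski x) (joukowski y) (joukowski z) * joukowski' y * joukowski' x) (at y)"
    by (rule DERIV_cmult_right[OF DERIV_chain2[OF poly3_has_derivative_t[OF supported_in_deriv_s[OF C]]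
          joukowski_has_derivative]]) (use assms in simp)
  then show ?thesis
    unfolding d2_def[of "d1 f"] by (rule deriv_eq_off_zero) (use assms in \<open>simp_all add: d1_poly3\<close>)
qed

lemma casimir_eq_derivatives:
  "casimir C p q r = shift_s (shift_s (deriv_s (deriv_s C))) p q r - 4 * deriv_s (deriv_s C) p q r
    + shift_t (shift_t (deriv_t (deriv_t C))) p q r - 4 * deriv_t (deriv_t C) p q r
    + 2 * shift_s (shift_t (deriv_t (deriv_s C))) p q r - 4 * shift_u (deriv_t (deriv_s C)) p q r
    + 3 * shift_s (deriv_s C) p q r + 3 * shift_t (deriv_t C) p q r + C p q r"
  unfolding casimir_def shift_s_def shift_t_def shift_u_def deriv_s_def deriv_t_def
  by (simp add: algebra_simps power2_eq_square)

lemma poly3_casimir: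
  assumes C: "supported_in M C"
  shows "poly3 (M + 2) (casimir C) s t u =
    (s * s - 4) * poly3 M (deriv_s (deriv_s C)) s t u + (t * t - 4) * poly3 M (deriv_t (deriv_t C)) s t u
    + (2 * s * t - 4 * u) * poly3 M (deriv_t (deriv_s C)) s t u
    + 3 * s * poly3 M (deriv_s C) s t u + 3 * t * poly3 M (deriv_t C) s t u + poly3 M C s t u"
proof -
  have supp: "supported_in M (deriv_s (deriv_s C))" "supported_in M (deriv_t (deriv_t C))"
    "supported_in M (deriv_t (deriv_s C))" "supported_in M (deriv_s C)" "supported_in M (deriv_t C)"
    using C by (simp_all add: supported_in_deriv_s supported_in_deriv_t)
  have add: "poly3 M' (\<lambda>p q r. X p q r + Y p q r) s t u = poly3 M' X s t u + poly3 M' Y s t u"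
    and diff: "poly3 M' (\<lambda>p q r. X p q r - Y p q r) s t u = poly3 M' X s t u - poly3 M' Y s t u"
    and scale: "poly3 M' (\<lambda>p q r. a * X p q r) s t u = a * poly3 M' X s t u" for M' X Y a
    using poly3_linear[of M' 1 X 1 Y] poly3_linear[of M' 1 X "-1" Y] poly3_linear[of M' a X 0 X] by simp_all
  have m: "M < M + 2" "Suc M < M + 2" by simp_all
  note mono = poly3_mono[OF _ le_add1[of M 2]]
  have "poly3 (M + 2) (shift_s (shift_s (deriv_s (deriv_s C)))) s t u = s * (s * poly3 M (deriv_s (deriv_s C)) s t u)"
    using poly3_shift_s[OF supported_in_shift_s[OF supp(1)] m(2)] poly3_shift_s[OF supp(1) m(1)] mono[OF supp(1)]
    by simp
  moreover have "poly3 (M + 2) (shift_t (shift_t (deriv_t (deriv_t C)))) s t u = t * (t * poly3 M (deriv_t (deriv_t C)) s t u)"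
    using poly3_shift_t[OF supported_in_shift_t[OF supp(2)] m(2)] poly3_shift_t[OF supp(2) m(1)] mono[OF supp(2)]
    by simp
  moreover have "poly3 (M + 2) (shift_s (shift_t (deriv_t (deriv_s C)))) s t u = s * (t * poly3 M (deriv_t (deriv_s C)) s t u)"
    using poly3_shift_s[OF supported_in_shift_t[OF supp(3)] m(2)] poly3_shift_t[OF supp(3) m(1)] mono[OF supp(3)]
    by simp
  moreover have "poly3 (M + 2) (shift_u (deriv_t (deriv_s C))) s t u = u * poly3 M (deriv_t (deriv_s C)) s t u"
    using poly3_shift_u[OF supp(3) m(1)] mono[OF supp(3)] by simp
  moreover have "poly3 (M + 2) (shift_s (deriv_s C)) s t u = s * poly3 M (deriv_s C) s t u"
    using poly3_shift_s[OF supp(4) m(1)] mono[OF supp(4)] by simp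
  moreover have "poly3 (M + 2) (shift_t (deriv_t C)) s t u = t * poly3 M (deriv_t C) s t u"
    using poly3_shift_t[OF supp(5) m(1)] mono[OF supp(5)] by simp
  moreover note mono[OF supp(1)] mono[OF supp(2)] mono[OF C]
  ultimately show ?thesis
    unfolding casimir_eq_derivatives[abs_def] add diff scale by (simp add: algebra_simps)
qed

lemma Hgen_joukowski:
  assumes x: "x \<notin> {0, 1, -1}" and y: "y \<notin> {0, 1, -1}"
  shows "Hgen x y z (Pss * joukowski' x * joukowski' x + Ps * (2 * inverse x ^ 3))
      (Ptt * joukowski' y * joukowski' y + Pt * (2 * inverse y ^ 3)) (Pst * joukowski' y * joukowski' x)
      (Ps * joukowski' x) (Pt * joukowski' y) P
    = (joukowski x * joukowski x - 4) * Pss + (joukowski y * joukowski y - 4) * Ptt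
      + (2 * joukowski x * joukowski y - 4 * joukowski z) * Pst + 3 * joukowski x * Ps + 3 * joukowski y * Pt + P"
proof -
  have nz: "v - inverse v \<noteq> 0" "v \<noteq> 0" if "v \<notin> {0, 1, -1}" for v :: complex
  proof -
    show "v \<noteq> 0" using that by auto
    have "(v - 1) * (v + 1) \<noteq> 0"
      using that by (metis eq_neg_iff_add_eq_0 eq_iff_diff_eq_0 mult_eq_0_iff insert_iff)
    then show "v - inverse v \<noteq> 0"
      using \<open>v \<noteq> 0\<close> by (auto simp: field_simps algebra_simps)
  qed
  have J': "joukowski' v = (v - inverse v) * inverse v" if "v \<noteq> 0" for v :: complex
    unfolding joukowski'_def using that by (simp add: field_simps power2_eq_square)
  have cancel2: "N / (a * b) * (G * (b * ib) * (a * ia)) = N * G * ia * ib"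
    if "a \<noteq> 0" "b \<noteq> 0" for a b ia ib N G :: complex
    using that by (simp add: field_simps)
  have cancel1: "N / a * (G * (a * ia)) = N * G * ia" if "a \<noteq> 0" for a ia N G :: complex
    using that by (simp add: field_simps)
  have "x * inverse x = 1" "y * inverse y = 1" using nz(2)[OF x] nz(2)[OF y] by simp_all
  then show ?thesis
    unfolding Hgen_def J'[OF nz(2)[OF x]] J'[OF nz(2)[OF y]] cancel2[OF nz(1)[OF x] nz(1)[OF y]]
      cancel1[OF nz(1)[OF x]] cancel1[OF nz(1)[OF y]] joukowski_def
    by algebra
qed

lemma H1_poly3:
  assumes C: "supported_in M C" and f: "agrees_poly3 M C f"
    and x: "x \<notin> {0, 1, -1}" and y: "y \<notin> {0, 1, -1}" and z: "z \<noteq> 0"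
  shows "H1 f x y z = poly3 (M + 2) (casimir C) (joukowski x) (joukowski y) (joukowski z)"
proof -
  have "x \<noteq> 0" "y \<noteq> 0" using x y by auto
  note derivs = d11_poly3 d22_poly3 d21_poly3 d1_poly3 d2_poly3
  have "f x y z = poly3 M C (joukowski x) (joukowski y) (joukowski z)"
    using f \<open>x \<noteq> 0\<close> \<open>y \<noteq> 0\<close> z unfolding agrees_poly3_def by blast
  then show ?thesis
    unfolding H1_def derivs[OF C f \<open>x \<noteq> 0\<close> \<open>y \<noteq> 0\<close> z] Hgen_joukowski[OF x y] poly3_casimir[OF C]
    by simp
qed

section \<open>Genus two Schur polynomials\<close>

lemma schur_family_origin: "schur_family \<phi> \<Longrightarrow> x \<noteq> 0 \<Longrightarrow> y \<noteq> 0 \<Longrightarrow> z \<noteq> 0 \<Longrightarrow> \<phi> 0 0 0 x y z = 1"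
  unfolding schur_family_def by blast

lemma schur_family_rec_s:
  assumes "schur_family \<phi>" "admissible (j1 - 1) (j2 - 1) j3" "x \<noteq> 0" "y \<noteq> 0" "z \<noteq> 0"
  shows "joukowski x * phiz \<phi> (j1 - 1) (j2 - 1) j3 x y z =
      Kc 1 1 (j1 - 1) (j2 - 1) j3 * phiz \<phi> j1 j2 j3 x y z + Kc 1 (-1) (j1 - 1) (j2 - 1) j3 * phiz \<phi> j1 (j2 - 2) j3 x y z
    + Kc (-1) 1 (j1 - 1) (j2 - 1) j3 * phiz \<phi> (j1 - 2) j2 j3 x y z
    + Kc (-1) (-1) (j1 - 1) (j2 - 1) j3 * phiz \<phi> (j1 - 2) (j2 - 2) j3 x y z"
  using assms unfolding schur_family_def joukowski_def sum_pm phiz_def[of \<phi> "j1 - 1"]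
  by (simp add: add.assoc)

lemma schur_family_rec_t:
  assumes "schur_family \<phi>" "admissible (j1 - 1) j2 (j3 - 1)" "x \<noteq> 0" "y \<noteq> 0" "z \<noteq> 0"
  shows "joukowski y * phiz \<phi> (j1 - 1) j2 (j3 - 1) x y z =
      Kc 1 1 (j1 - 1) (j3 - 1) j2 * phiz \<phi> j1 j2 j3 x y z + Kc 1 (-1) (j1 - 1) (j3 - 1) j2 * phiz \<phi> j1 j2 (j3 - 2) x y z
    + Kc (-1) 1 (j1 - 1) (j3 - 1) j2 * phiz \<phi> (j1 - 2) j2 j3 x y z
    + Kc (-1) (-1) (j1 - 1) (j3 - 1) j2 * phiz \<phi> (j1 - 2) j2 (j3 - 2) x y z"
  using assms unfolding schur_family_def joukowski_def sum_pm phiz_def[of \<phi> "j1 - 1"]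
  by (simp add: add.assoc)

lemma schur_family_rec_u:
  assumes "schur_family \<phi>" "admissible j1 (j2 - 1) (j3 - 1)" "x \<noteq> 0" "y \<noteq> 0" "z \<noteq> 0"
  shows "joukowski z * phiz \<phi> j1 (j2 - 1) (j3 - 1) x y z =
      Kc 1 1 (j2 - 1) (j3 - 1) j1 * phiz \<phi> j1 j2 j3 x y z + Kc 1 (-1) (j2 - 1) (j3 - 1) j1 * phiz \<phi> j1 j2 (j3 - 2) x y z
    + Kc (-1) 1 (j2 - 1) (j3 - 1) j1 * phiz \<phi> j1 (j2 - 2) j3 x y z
    + Kc (-1) (-1) (j2 - 1) (j3 - 1) j1 * phiz \<phi> j1 (j2 - 2) (j3 - 2) x y z"
  using assms unfolding schur_family_def joukowski_def sum_pm phiz_def[of \<phi> j1 "j2 - 1"]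
  by (simp add: add.assoc)

lemma schur_family_represents:
  assumes \<phi>: "schur_family \<phi>"
  shows "\<exists>C. represents (phiz \<phi> j1 j2 j3) C"
proof (cases "admissible j1 j2 j3")
  case False
  then show ?thesis using represents_zero unfolding phiz_def by auto
next
  case True
  then show ?thesis
  proof (induction rule: admissible_induct)
    case (less j1 j2 j3)
    have IH: "\<exists>C. represents (phiz \<phi> k1 k2 k3) C" if "k1 + k2 + k3 < j1 + j2 + j3" for k1 k2 k3
      using less.IH[OF _ that] represents_zero unfolding phiz_def by (cases "admissible k1 k2 k3") auto
    from less.hyps show ?case
    proof (cases rule: admissible_cases)
      case origin
      have "represents (phiz \<phi> 0 0 0) (\<lambda>p q r. of_bool (p = 0 \<and> q = 0 \<and> r = 0))"
        by (rule represents_cong[OF represents_one])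
          (simp add: phiz_def admissible_def schur_family_origin[OF \<phi>])
      then show ?thesis using origin by blast
    next
      case s_step
      obtain C0 C1 C2 C3 where C: "represents (phiz \<phi> (j1 - 1) (j2 - 1) j3) C0" "represents (phiz \<phi> j1 (j2 - 2) j3) C1"
        "represents (phiz \<phi> (j1 - 2) j2 j3) C2" "represents (phiz \<phi> (j1 - 2) (j2 - 2) j3) C3"
        using IH[of "j1 - 1" "j2 - 1" j3] IH[of j1 "j2 - 2" j3] IH[of "j1 - 2" j2 j3] IH[of "j1 - 2" "j2 - 2" j3]
        by auto
      show ?thesis
        by (rule represents_solve[OF Kc_11_nonzero[OF s_step] represents_shift_s[OF C(1)] C(2-4)
              schur_family_rec_s[OF \<phi> s_step]])
    next
      case t_step
      obtain C0 C1 C2 C3 where C: "represents (phiz \<phi> (j1 - 1) j2 (j3 - 1)) C0" "represents (phiz \<phi> j1 j2 (j3 - 2)) C1"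
        "represents (phiz \<phi> (j1 - 2) j2 j3) C2" "represents (phiz \<phi> (j1 - 2) j2 (j3 - 2)) C3"
        using IH[of "j1 - 1" j2 "j3 - 1"] IH[of j1 j2 "j3 - 2"] IH[of "j1 - 2" j2 j3] IH[of "j1 - 2" j2 "j3 - 2"]
        by auto
      show ?thesis
        by (rule represents_solve[OF Kc_11_nonzero[OF admissible_swap23[THEN iffD2, OF t_step]]
              represents_shift_t[OF C(1)] C(2-4) schur_family_rec_t[OF \<phi> t_step]])
    next
      case u_step
      obtain C0 C1 C2 C3 where C: "represents (phiz \<phi> j1 (j2 - 1) (j3 - 1)) C0" "represents (phiz \<phi> j1 j2 (j3 - 2)) C1"
        "represents (phiz \<phi> j1 (j2 - 2) j3) C2" "represents (phiz \<phi> j1 (j2 - 2) (j3 - 2)) C3"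
        using IH[of j1 "j2 - 1" "j3 - 1"] IH[of j1 j2 "j3 - 2"] IH[of j1 "j2 - 2" j3] IH[of j1 "j2 - 2" "j3 - 2"]
        by auto
      show ?thesis
        by (rule represents_solve[OF Kc_11_nonzero[OF admissible_rotate[THEN iffD2, OF u_step]]
              represents_shift_u[OF C(1)] C(2-4) schur_family_rec_u[OF \<phi> u_step]])
    qed
  qed
qed

definition coeffs_of :: "(int \<Rightarrow> int \<Rightarrow> int \<Rightarrow> fun3) \<Rightarrow> int \<Rightarrow> int \<Rightarrow> int \<Rightarrow> coeffs" where
  "coeffs_of \<phi> j1 j2 j3 = (SOME C. represents (phiz \<phi> j1 j2 j3) C)"

lemma represents_coeffs_of: "schur_family \<phi> \<Longrightarrow> represents (phiz \<phi> j1 j2 j3) (coeffs_of \<phi> j1 j2 j3)"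
  unfolding coeffs_of_def by (rule someI_ex[OF schur_family_represents])

lemma coeff_family_coeffs_of:
  assumes \<phi>: "schur_family \<phi>"
  shows "coeff_family (coeffs_of \<phi>)"
proof -
  note R = represents_coeffs_of[OF \<phi>]
  have pm_sum_R: "represents (\<lambda>x y z. \<Sum>a\<in>pm. \<Sum>b\<in>pm. k a b * phiz \<phi> (i1 a b) (i2 a b) (i3 a b) x y z)
      (\<lambda>p q r. \<Sum>a\<in>pm. \<Sum>b\<in>pm. k a b * coeffs_of \<phi> (i1 a b) (i2 a b) (i3 a b) p q r)" for k i1 i2 i3
    by (rule represents_pm_sum[OF R])
  have phiz_adm: "phiz \<phi> j1 j2 j3 = \<phi> j1 j2 j3" if "admissible j1 j2 j3" for j1 j2 j3
    using that unfolding phiz_def by simp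
  have "coeffs_of \<phi> j1 j2 j3 = (\<lambda>_ _ _. 0)" if "\<not> admissible j1 j2 j3" for j1 j2 j3
    by (rule represents_unique[OF R represents_zero]) (simp add: phiz_def that)
  moreover have "nonneg_support (coeffs_of \<phi> j1 j2 j3)" for j1 j2 j3
    using R[of j1 j2 j3] supported_in_nonneg_support unfolding represents_def by blast
  moreover have "coeffs_of \<phi> 0 0 0 = (\<lambda>p q r. of_bool (p = 0 \<and> q = 0 \<and> r = 0))"
    by (rule represents_unique[OF R represents_one])
      (simp add: phiz_def admissible_def schur_family_origin[OF \<phi>])
  moreover have
    "shift_s (coeffs_of \<phi> j1 j2 j3) = (\<lambda>p q r. \<Sum>a\<in>pm. \<Sum>b\<in>pm. Kc a b j1 j2 j3 * coeffs_of \<phi> (j1 + a) (j2 + b) j3 p q r) \<and>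
     shift_t (coeffs_of \<phi> j1 j2 j3) = (\<lambda>p q r. \<Sum>a\<in>pm. \<Sum>b\<in>pm. Kc a b j1 j3 j2 * coeffs_of \<phi> (j1 + a) j2 (j3 + b) p q r) \<and>
     shift_u (coeffs_of \<phi> j1 j2 j3) = (\<lambda>p q r. \<Sum>a\<in>pm. \<Sum>b\<in>pm. Kc a b j2 j3 j1 * coeffs_of \<phi> j1 (j2 + a) (j3 + b) p q r)"
    if adm: "admissible j1 j2 j3" for j1 j2 j3
  proof -
    have "joukowski x * phiz \<phi> j1 j2 j3 x y z = (\<Sum>a\<in>pm. \<Sum>b\<in>pm. Kc a b j1 j2 j3 * phiz \<phi> (j1 + a) (j2 + b) j3 x y z)"
      "joukowski y * phiz \<phi> j1 j2 j3 x y z = (\<Sum>a\<in>pm. \<Sum>b\<in>pm. Kc a b j1 j3 j2 * phiz \<phi> (j1 + a) j2 (j3 + b) x y z)"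
      "joukowski z * phiz \<phi> j1 j2 j3 x y z = (\<Sum>a\<in>pm. \<Sum>b\<in>pm. Kc a b j2 j3 j1 * phiz \<phi> j1 (j2 + a) (j3 + b) x y z)"
      if "x \<noteq> 0" "y \<noteq> 0" "z \<noteq> 0" for x y z
      using \<phi> adm that unfolding schur_family_def joukowski_def phiz_adm[OF adm] by blast+
    then show ?thesis
      by (intro conjI represents_unique[OF represents_shift_s[OF R] pm_sum_R]
          represents_unique[OF represents_shift_t[OF R] pm_sum_R]
          represents_unique[OF represents_shift_u[OF R] pm_sum_R])
  qed
  ultimately show ?thesis unfolding coeff_family_def by blast
qed

theorem schur_family_H1:
  assumes \<phi>: "schur_family \<phi>" and adm: "admissible j1 j2 j3"
    and x: "x \<notin> {0, 1, -1}" and y: "y \<notin> {0, 1, -1}" and z: "z \<noteq> 0"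
  shows "H1 (\<phi> j1 j2 j3) x y z = (of_int j1 + 1)^2 * \<phi> j1 j2 j3 x y z"
proof -
  define C where "C = coeffs_of \<phi> j1 j2 j3"
  obtain M where C: "supported_in M C" and f: "agrees_poly3 M C (\<phi> j1 j2 j3)"
    using represents_coeffs_of[OF \<phi>, of j1 j2 j3] adm unfolding represents_def phiz_def C_def by auto
  have "casimir C = (\<lambda>p q r. of_int ((j1 + 1)^2) * C p q r)"
    using coeff_family_casimir_eigen[OF coeff_family_coeffs_of[OF \<phi>] adm]
    unfolding casimir_eigen_def C_def by (simp add: fun_eq_iff)
  then have "H1 (\<phi> j1 j2 j3) x y z = of_int ((j1 + 1)^2) * poly3 (M + 2) C (joukowski x) (joukowski y) (joukowski z)"
    using H1_poly3[OF C f x y z] poly3_linear[of "M + 2" "of_int ((j1 + 1)^2)" C 0 C] by simp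
  also have "\<dots> = (of_int j1 + 1)^2 * \<phi> j1 j2 j3 x y z"
    using f x y z poly3_mono[OF C, of "M + 2"] unfolding agrees_poly3_def by simp
  finally show ?thesis .
qed

definition schur_swap12 :: "(int \<Rightarrow> int \<Rightarrow> int \<Rightarrow> fun3) \<Rightarrow> int \<Rightarrow> int \<Rightarrow> int \<Rightarrow> fun3" where
  "schur_swap12 \<phi> k1 k2 k3 x y z = \<phi> k2 k1 k3 x z y"

definition schur_rotate :: "(int \<Rightarrow> int \<Rightarrow> int \<Rightarrow> fun3) \<Rightarrow> int \<Rightarrow> int \<Rightarrow> int \<Rightarrow> fun3" where
  "schur_rotate \<phi> k1 k2 k3 x y z = \<phi> k2 k3 k1 z x y"

lemma phiz_schur_swap12: "phiz (schur_swap12 \<phi>) k1 k2 k3 x y z = phiz \<phi> k2 k1 k3 x z y"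
  using admissible_swap12[of k2 k1 k3] unfolding phiz_def schur_swap12_def by simp

lemma phiz_schur_rotate: "phiz (schur_rotate \<phi>) k1 k2 k3 x y z = phiz \<phi> k2 k3 k1 z x y"
  using admissible_rotate[of k2 k3 k1] unfolding phiz_def schur_rotate_def by simp

lemma schur_family_swap12:
  assumes \<phi>: "schur_family \<phi>"
  shows "schur_family (schur_swap12 \<phi>)"
  unfolding schur_family_def
proof (intro allI impI conjI)
  fix x y z :: complex
  assume nz: "x \<noteq> 0" "y \<noteq> 0" "z \<noteq> 0"
  show "schur_swap12 \<phi> 0 0 0 x y z = 1"
    unfolding schur_swap12_def using schur_family_origin[OF \<phi>] nz by simp
  fix k1 k2 k3
  assume "admissible k1 k2 k3"
  then have "admissible k2 k1 k3" using admissible_swap12[of k2 k1 k3] by simp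
  then have rec: "(x + inverse x) * \<phi> k2 k1 k3 x z y = (\<Sum>a\<in>pm. \<Sum>b\<in>pm. Kc a b k2 k1 k3 * phiz \<phi> (k2 + a) (k1 + b) k3 x z y)"
    "(z + inverse z) * \<phi> k2 k1 k3 x z y = (\<Sum>a\<in>pm. \<Sum>b\<in>pm. Kc a b k2 k3 k1 * phiz \<phi> (k2 + a) k1 (k3 + b) x z y)"
    "(y + inverse y) * \<phi> k2 k1 k3 x z y = (\<Sum>a\<in>pm. \<Sum>b\<in>pm. Kc a b k1 k3 k2 * phiz \<phi> k2 (k1 + a) (k3 + b) x z y)"
    using \<phi> nz unfolding schur_family_def by blast+
  show "(x + inverse x) * schur_swap12 \<phi> k1 k2 k3 x y z =
      (\<Sum>a\<in>pm. \<Sum>b\<in>pm. Kc a b k1 k2 k3 * phiz (schur_swap12 \<phi>) (k1 + a) (k2 + b) k3 x y z)"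
    unfolding schur_swap12_def phiz_schur_swap12 rec(1) sum_pm
    by (simp only: Kc_swap[of _ _ k1 k2 k3] add_ac)
  show "(y + inverse y) * schur_swap12 \<phi> k1 k2 k3 x y z =
      (\<Sum>a\<in>pm. \<Sum>b\<in>pm. Kc a b k1 k3 k2 * phiz (schur_swap12 \<phi>) (k1 + a) k2 (k3 + b) x y z)"
    unfolding schur_swap12_def phiz_schur_swap12 rec(3) ..
  show "(z + inverse z) * schur_swap12 \<phi> k1 k2 k3 x y z =
      (\<Sum>a\<in>pm. \<Sum>b\<in>pm. Kc a b k2 k3 k1 * phiz (schur_swap12 \<phi>) k1 (k2 + a) (k3 + b) x y z)"
    unfolding schur_swap12_def phiz_schur_swap12 rec(2) ..
qed

lemma schur_family_rotate:
  assumes \<phi>: "schur_family \<phi>"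
  shows "schur_family (schur_rotate \<phi>)"
  unfolding schur_family_def
proof (intro allI impI conjI)
  fix x y z :: complex
  assume nz: "x \<noteq> 0" "y \<noteq> 0" "z \<noteq> 0"
  show "schur_rotate \<phi> 0 0 0 x y z = 1"
    unfolding schur_rotate_def using schur_family_origin[OF \<phi>] nz by simp
  fix k1 k2 k3
  assume "admissible k1 k2 k3"
  then have "admissible k2 k3 k1" using admissible_rotate[of k2 k3 k1] by simp
  then have rec: "(z + inverse z) * \<phi> k2 k3 k1 z x y = (\<Sum>a\<in>pm. \<Sum>b\<in>pm. Kc a b k2 k3 k1 * phiz \<phi> (k2 + a) (k3 + b) k1 z x y)"
    "(x + inverse x) * \<phi> k2 k3 k1 z x y = (\<Sum>a\<in>pm. \<Sum>b\<in>pm. Kc a b k2 k1 k3 * phiz \<phi> (k2 + a) k3 (k1 + b) z x y)"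
    "(y + inverse y) * \<phi> k2 k3 k1 z x y = (\<Sum>a\<in>pm. \<Sum>b\<in>pm. Kc a b k3 k1 k2 * phiz \<phi> k2 (k3 + a) (k1 + b) z x y)"
    using \<phi> nz unfolding schur_family_def by blast+
  show "(x + inverse x) * schur_rotate \<phi> k1 k2 k3 x y z =
      (\<Sum>a\<in>pm. \<Sum>b\<in>pm. Kc a b k1 k2 k3 * phiz (schur_rotate \<phi>) (k1 + a) (k2 + b) k3 x y z)"
    unfolding schur_rotate_def phiz_schur_rotate rec(2) sum_pm
    by (simp only: Kc_swap[of _ _ k1 k2 k3] add_ac)
  show "(y + inverse y) * schur_rotate \<phi> k1 k2 k3 x y z =
      (\<Sum>a\<in>pm. \<Sum>b\<in>pm. Kc a b k1 k3 k2 * phiz (schur_rotate \<phi>) (k1 + a) k2 (k3 + b) x y z)"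
    unfolding schur_rotate_def phiz_schur_rotate rec(3) sum_pm
    by (simp only: Kc_swap[of _ _ k1 k3 k2] add_ac)
  show "(z + inverse z) * schur_rotate \<phi> k1 k2 k3 x y z =
      (\<Sum>a\<in>pm. \<Sum>b\<in>pm. Kc a b k2 k3 k1 * phiz (schur_rotate \<phi>) k1 (k2 + a) (k3 + b) x y z)"
    unfolding schur_rotate_def phiz_schur_rotate rec(1) ..
qed

theorem schur_family_H2:
  assumes \<phi>: "schur_family \<phi>" and adm: "admissible j1 j2 j3"
    and x: "x \<notin> {0, 1, -1}" and y: "y \<noteq> 0" and z: "z \<notin> {0, 1, -1}"
  shows "H2 (\<phi> j1 j2 j3) x y z = (of_int j2 + 1)^2 * \<phi> j1 j2 j3 x y z"
proof -
  have "admissible j2 j1 j3" using adm admissible_swap12[of j2 j1 j3] by simp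
  from schur_family_H1[OF schur_family_swap12[OF \<phi>] this x z y]
  show ?thesis unfolding H1_def H2_def d1_def d2_def d3_def schur_swap12_def .
qed

theorem schur_family_H3:
  assumes \<phi>: "schur_family \<phi>" and adm: "admissible j1 j2 j3"
    and x: "x \<noteq> 0" and y: "y \<notin> {0, 1, -1}" and z: "z \<notin> {0, 1, -1}"
  shows "H3 (\<phi> j1 j2 j3) x y z = (of_int j3 + 1)^2 * \<phi> j1 j2 j3 x y z"
proof -
  have "admissible j3 j1 j2" using adm admissible_rotate[of j1 j2 j3] by simp
  from schur_family_H1[OF schur_family_rotate[OF \<phi>] this y z x]
  show ?thesis unfolding H1_def H3_def d1_def d2_def d3_def schur_rotate_def .
qed

theorem mainTheorem7:
  fixes \<phi> :: "int \<Rightarrow> int \<Rightarrow> int \<Rightarrow> complex \<Rightarrow> complex \<Rightarrow> complex \<Rightarrow> complex"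
  assumes "schur_family \<phi>"
    and "admissible j1 j2 j3"
    and "i \<in> {1, 2, 3}"
    and "x12 \<notin> {0, 1, -1}" and "x13 \<notin> {0, 1, -1}" and "x23 \<notin> {0, 1, -1}"
  shows "Hhat i (\<phi> j1 j2 j3) x12 x13 x23
           = (of_int (jsel i j1 j2 j3) + 1)^2 * \<phi> j1 j2 j3 x12 x13 x23"
proof -
  have "x12 \<noteq> 0" "x13 \<noteq> 0" "x23 \<noteq> 0" using assms(4-6) by auto
  with assms(3) show ?thesis
    using schur_family_H1[OF assms(1,2,4,5)] schur_family_H2[OF assms(1,2,4) _ assms(6)]
      schur_family_H3[OF assms(1,2) _ assms(5,6)]
    unfolding Hhat_def jsel_def by auto
qed

end
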